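(* The shuffle algebra $\mathbf{PQSym}=\bigoplus_{n\ge1}K[PF_n]$ with operations $f\bullet_\gamma g=(f\times g)\cdot\gamma$, equipped with the coproduct $\Delta(f)=\sum_{r=1}^{n-1}\mathrm{Park}(f(1),\dots,f(r))\otimes\mathrm{Park}(f(r+1),\dots,f(n))$ for $f\in PF_n$, is a shuffle bialgebra.
   Context: Permutations $\sigma\in S_n$ are written as words $(\sigma(1),\dots,\sigma(n))$; $1_n$ is the identity, and $\sigma\cdot\tau$ denotes composition, $(\sigma\cdot\tau)(i)=\sigma(\tau(i))$. For $\sigma\in S_n$, $\tau\in S_m$, $\sigma\times\tau\in S_{n+m}$ is $(\sigma(1),\dots,\sigma(n),\tau(1)+n,\dots,\tau(m)+n)$. For nonnegative integers $n_1,\dots,n_r$ with sum $n$, $Sh(n_1,\dots,n_r)$ is the set of $\sigma\in S_n$ such that $\sigma^{-1}(n_1+\dots+n_{k-1}+1)<\dots<\sigma^{-1}(n_1+\dots+n_k)$ for every $k$. For $n,m\ge0$, $\epsilon_{n,m}=(n+1,\dots,n+m,1,\dots,n)\in Sh(n,m)$. A parking function of size $n$ is a map $f:\{1,\dots,n\}\to\{1,\dots,n\}$ (written $(f(1),\dots,f(n))$) whose nondecreasing rearrangement $f^\uparrow$ satisfies $f^\uparrow(i)\le i$ for all $i$; $PF_n$ is the set of them, of degree $n$. For $f\in PF_n$, $g\in PF_m$: $f\times g=(f(1),\dots,f(n),g(1)+n,\dots,g(m)+n)$, and $(h\cdot\gamma)(i)=h(\gamma(i))$. For a nondecreasing map $h:\{1,\dots,k\}\to\mathbb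 Z_{>0}$, $\mathrm{Park}(h)(1)=1$ and $\mathrm{Park}(h)(j)=\min\{\mathrm{Park}(h)(j-1)+h(j)-h(j-1),\,j\}$ for $j>1$. For an arbitrary map $h:\{1,\dots,k\}\to\mathbb Z_{>0}$, write $h=h^\uparrow\cdot\sigma$ with $h^\uparrow$ nondecreasing and $\sigma\in S_k$, and set $\mathrm{Park}(h)=\mathrm{Park}(h^\uparrow)\cdot\sigma$ (independent of the choice of $\sigma$). A shuffle algebra is a graded vector space $A=\bigoplus_{n\ge0}A_n$ over a field $K$ with linear maps $\bullet_\gamma:A_n\otimes A_m\to A_{n+m}$ for all $n,m\ge0$ and $\gamma\in Sh(n,m)$, such that for $x\in A_n$, $y\in A_m$, $z\in A_r$ one has $x\bullet_\gamma(y\bullet_\delta z)=(x\bullet_\sigma y)\bullet_\lambda z$ whenever $\gamma\in Sh(n,m+r)$, $\delta\in Sh(m,r)$, $\sigma\in Sh(n,m)$, $\lambda\in Sh(n+m,r)$ satisfy $(1_n\times\delta)\cdot\gamma=(\sigma\times1_r)\cdot\lambda$. Decomposition of shuffles: for $\gamma\in Sh(n,m)$ and $0\le r\le n+m$, put $n_1=|\gamma^{-1}(\{1,\dots,n\})\cap\{1,\dots,r\}|$ and $m_1=r-n_1$; there are unique $\gamma^r_{(1)}\in Sh(n_1,m_1)$ and $\gamma^{n+m-r}_{(2)}\in Sh(n-n_1,m-m_1)$ with $\gamma=(1_{n_1}\times\epsilon_{n-n_1,m_1}\times1_{m-m_1})\cdot(\gamma^r_{(1)}\times\gamma^{n+m-r}_{(2)})$.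 A shuffle bialgebra is a shuffle algebra $A$ with $A_0=0$ together with a coassociative coproduct $\Delta:A\to A\otimes A$ with $\Delta(A_n)\subseteq\bigoplus_{i=1}^{n-1}A_i\otimes A_{n-i}$, such that for $x\in A_n$, $y\in A_m$, $\gamma\in Sh(n,m)$: $\Delta(x\bullet_\gamma y)=\sum_{r=1}^{n+m-1}\sum(x_{(1)}\bullet_{\gamma^r_{(1)}}y_{(1)})\otimes(x_{(2)}\bullet_{\gamma^{n+m-r}_{(2)}}y_{(2)})$, where, with $\Delta_+(z)=z\otimes1+1\otimes z+\Delta(z)$ on $K1\oplus A$ ($1$ of degree $0$), the inner sum is over the homogeneous components $x_{(1)}\otimes x_{(2)}$ of $\Delta_+(x)$ with $|x_{(1)}|=n_1$ and $y_{(1)}\otimes y_{(2)}$ of $\Delta_+(y)$ with $|y_{(1)}|=m_1$, using the conventions $1\bullet_\tau z=z\bullet_\tau1=z$. *)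

theory Defs
  imports Main
begin

text \<open>A permutation of S_n is the word (sigma(1),...,sigma(n)), stored as a list
  (list index i-1 holds sigma(i)).\<close>

definition is_perm :: "nat \<Rightarrow> nat list \<Rightarrow> bool" where
  "is_perm n \<sigma> \<longleftrightarrow> distinct \<sigma> \<and> set \<sigma> = {1..n}"

definition idp :: "nat \<Rightarrow> nat list" where
  "idp n = [1..<n+1]"

text \<open>(h . gamma)(i) = h(gamma(i)); used both for composition of permutations
  and for composing maps (parking functions) with permutations.\<close>
definition comp_w :: "nat list \<Rightarrow> nat list \<Rightarrow> nat list" where
  "comp_w h \<gamma> = map (\<lambda>i. h ! (i - 1)) \<gamma>"

definition times_w :: "nat list \<Rightarrow> nat list \<Rightarrow> nat list" where
  "times_w \<sigma> \<tau> = \<sigma> @ map (\<lambda>i. i + length \<sigma>) \<tau>"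

text \<open>Sh(n,m): sigma^{-1} is increasing on {1..n} and on {n+1..n+m}, i.e.
  two values from the same block appear in the word in increasing order.\<close>
definition Sh :: "nat \<Rightarrow> nat \<Rightarrow> nat list set" where
  "Sh n m = {\<sigma>. is_perm (n + m) \<sigma> \<and>
     (\<forall>p q. p < q \<and> q < length \<sigma> \<and> ((\<sigma> ! p \<le> n) \<longleftrightarrow> (\<sigma> ! q \<le> n))
              \<longrightarrow> \<sigma> ! p < \<sigma> ! q)}"

definition eps :: "nat \<Rightarrow> nat \<Rightarrow> nat list" where
  "eps n m = [n+1..<n+m+1] @ [1..<n+1]"

definition is_pf :: "nat \<Rightarrow> nat list \<Rightarrow> bool" where
  "is_pf n f \<longleftrightarrow> length f = n \<and> (\<forall>i<n. 1 \<le> f ! i \<and> f ! i \<le> n)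
      \<and> (\<forall>i<n. sort f ! i \<le> i + 1)"

text \<open>Park of a nondecreasing list, 0-indexed: pk h j is Park(h)(j+1).\<close>
fun pk :: "nat list \<Rightarrow> nat \<Rightarrow> nat" where
  "pk h 0 = 1"
| "pk h (Suc j) = min (pk h j + (h ! Suc j - h ! j)) (j + 2)"

definition park_up :: "nat list \<Rightarrow> nat list" where
  "park_up h = map (pk h) [0..<length h]"

definition park :: "nat list \<Rightarrow> nat list" where
  "park h = comp_w (park_up (sort h))
     (SOME \<sigma>. is_perm (length h) \<sigma> \<and> h = comp_w (sort h) \<sigma>)"

definition supp :: "('b \<Rightarrow> 'k::zero) \<Rightarrow> 'b set" where
  "supp x = {b. x b \<noteq> 0}"

text \<open>The vector space with basis B: finitely supported functions B -> K.\<close>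
definition fvec :: "'b set \<Rightarrow> ('b \<Rightarrow> 'k::zero) set" where
  "fvec B = {x. finite (supp x) \<and> supp x \<subseteq> B}"

definition hom :: "'b set \<Rightarrow> ('b \<Rightarrow> nat) \<Rightarrow> nat \<Rightarrow> ('b \<Rightarrow> 'k::zero) set" where
  "hom B deg n = {x \<in> fvec B. \<forall>b \<in> supp x. deg b = n}"

definition bvec :: "'b \<Rightarrow> 'b \<Rightarrow> 'k::{zero,one}" where
  "bvec b = (\<lambda>c. if c = b then 1 else 0)"

definition tens :: "('b \<Rightarrow> 'k::times) \<Rightarrow> ('c \<Rightarrow> 'k) \<Rightarrow> ('b \<times> 'c \<Rightarrow> 'k)" where
  "tens u v = (\<lambda>(p, q). u p * v q)"

text \<open>Linear extensions of F tensor id and id tensor F, applied to a tensor t.\<close>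
definition lmap :: "(('b \<Rightarrow> 'k::comm_ring_1) \<Rightarrow> ('b \<times> 'b \<Rightarrow> 'k)) \<Rightarrow> ('b \<times> 'b \<Rightarrow> 'k)
                    \<Rightarrow> ('b \<times> 'b \<times> 'b \<Rightarrow> 'k)" where
  "lmap F t = (\<lambda>(a, b, c). \<Sum>(p, q)\<in>supp t. t (p, q) * F (bvec p) (a, b) * bvec q c)"

definition rmap :: "(('b \<Rightarrow> 'k::comm_ring_1) \<Rightarrow> ('b \<times> 'b \<Rightarrow> 'k)) \<Rightarrow> ('b \<times> 'b \<Rightarrow> 'k)
                    \<Rightarrow> ('b \<times> 'b \<times> 'b \<Rightarrow> 'k)" where
  "rmap F t = (\<lambda>(a, b, c). \<Sum>(p, q)\<in>supp t. t (p, q) * bvec p a * F (bvec q) (b, c))"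

definition shuffle_algebra ::
  "'b set \<Rightarrow> ('b \<Rightarrow> nat) \<Rightarrow> (nat list \<Rightarrow> ('b \<Rightarrow> 'k::field) \<Rightarrow> ('b \<Rightarrow> 'k) \<Rightarrow> ('b \<Rightarrow> 'k)) \<Rightarrow> bool"
  where
  "shuffle_algebra B deg mu \<longleftrightarrow>
    (\<forall>n m \<gamma>. \<gamma> \<in> Sh n m \<longrightarrow>
       (\<forall>x\<in>hom B deg n. \<forall>y\<in>hom B deg m. mu \<gamma> x y \<in> hom B deg (n + m)) \<and>
       (\<forall>x\<in>hom B deg n. \<forall>x'\<in>hom B deg n. \<forall>y\<in>hom B deg m. \<forall>a.
          mu \<gamma> (\<lambda>b. a * x b + x' b) y = (\<lambda>b. a * mu \<gamma> x y b + mu \<gamma> x' y b)) \<and>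
       (\<forall>x\<in>hom B deg n. \<forall>y\<in>hom B deg m. \<forall>y'\<in>hom B deg m. \<forall>a.
          mu \<gamma> x (\<lambda>b. a * y b + y' b) = (\<lambda>b. a * mu \<gamma> x y b + mu \<gamma> x y' b))) \<and>
    (\<forall>n m r x y z \<gamma> \<delta> \<sigma> lam.
       x \<in> hom B deg n \<and> y \<in> hom B deg m \<and> z \<in> hom B deg r \<and>
       \<gamma> \<in> Sh n (m + r) \<and> \<delta> \<in> Sh m r \<and> \<sigma> \<in> Sh n m \<and> lam \<in> Sh (n + m) r \<and>
       comp_w (times_w (idp n) \<delta>) \<gamma> = comp_w (times_w \<sigma> (idp r)) lam
       \<longrightarrow> mu \<gamma> x (mu \<delta> y z) = mu lam (mu \<sigma> x y) z)"

definition sh_n1 :: "nat list \<Rightarrow> nat \<Rightarrow> nat \<Rightarrow> nat" where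
  "sh_n1 \<gamma> n r = length (filter (\<lambda>v. v \<le> n) (take r \<gamma>))"

definition sh_decomp :: "nat list \<Rightarrow> nat \<Rightarrow> nat \<Rightarrow> nat \<Rightarrow> nat list \<times> nat list" where
  "sh_decomp \<gamma> n m r =
    (let n1 = sh_n1 \<gamma> n r; m1 = r - n1 in
     THE (g1, g2). g1 \<in> Sh n1 m1 \<and> g2 \<in> Sh (n - n1) (m - m1) \<and>
       \<gamma> = comp_w (times_w (times_w (idp n1) (eps (n - n1) m1)) (idp (m - m1))) (times_w g1 g2))"

text \<open>K1 + A has basis 'b option, None standing for the unit 1 (degree 0).\<close>
fun odeg :: "('b \<Rightarrow> nat) \<Rightarrow> 'b option \<Rightarrow> nat" where
  "odeg deg None = 0"
| "odeg deg (Some b) = deg b"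

definition dplus :: "(('b \<Rightarrow> 'k::field) \<Rightarrow> ('b \<times> 'b \<Rightarrow> 'k)) \<Rightarrow> ('b \<Rightarrow> 'k)
                     \<Rightarrow> ('b option \<times> 'b option \<Rightarrow> 'k)" where
  "dplus cop x = (\<lambda>(u, v). case (u, v) of
       (Some a, None) \<Rightarrow> x a
     | (None, Some a) \<Rightarrow> x a
     | (Some a, Some b) \<Rightarrow> cop x (a, b)
     | (None, None) \<Rightarrow> 0)"

text \<open>Product of two basis elements of K1 + A, with 1 . z = z . 1 = z.
  (The case 1 . 1 never occurs in the compatibility formula below.)\<close>
fun oprod :: "(nat list \<Rightarrow> ('b \<Rightarrow> 'k::field) \<Rightarrow> ('b \<Rightarrow> 'k) \<Rightarrow> ('b \<Rightarrow> 'k))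
              \<Rightarrow> nat list \<Rightarrow> 'b option \<Rightarrow> 'b option \<Rightarrow> ('b \<Rightarrow> 'k)" where
  "oprod mu \<tau> None (Some b) = bvec b"
| "oprod mu \<tau> (Some a) None = bvec a"
| "oprod mu \<tau> (Some a) (Some b) = mu \<tau> (bvec a) (bvec b)"
| "oprod mu \<tau> None None = (\<lambda>_. 0)"

definition shuffle_bialgebra ::
  "'b set \<Rightarrow> ('b \<Rightarrow> nat) \<Rightarrow> (nat list \<Rightarrow> ('b \<Rightarrow> 'k::field) \<Rightarrow> ('b \<Rightarrow> 'k) \<Rightarrow> ('b \<Rightarrow> 'k))
     \<Rightarrow> (('b \<Rightarrow> 'k) \<Rightarrow> ('b \<times> 'b \<Rightarrow> 'k)) \<Rightarrow> bool"
  where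
  "shuffle_bialgebra B deg mu cop \<longleftrightarrow>
    shuffle_algebra B deg mu \<and>
    hom B deg 0 = {(\<lambda>_. 0) :: 'b \<Rightarrow> 'k} \<and>
    \<comment> \<open>Delta is linear\<close>
    (\<forall>x\<in>fvec B. \<forall>x'\<in>fvec B. \<forall>a.
       cop (\<lambda>b. a * x b + x' b) = (\<lambda>t. a * cop x t + cop x' t)) \<and>
    \<comment> \<open>Delta(A_n) is contained in the sum over 1 <= i <= n-1 of A_i tensor A_(n-i)\<close>
    (\<forall>n. \<forall>x\<in>hom B deg n. cop x \<in> fvec (B \<times> B) \<and>
       (\<forall>(p, q)\<in>supp (cop x). 1 \<le> deg p \<and> deg p \<le> n - 1 \<and> deg q = n - deg p)) \<and>
    \<comment> \<open>coassociativity\<close>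
    (\<forall>x\<in>fvec B. lmap cop (cop x) = rmap cop (cop x)) \<and>
    \<comment> \<open>compatibility\<close>
    (\<forall>n m \<gamma> x y. x \<in> hom B deg n \<and> y \<in> hom B deg m \<and> \<gamma> \<in> Sh n m \<longrightarrow>
       cop (mu \<gamma> x y) =
       (\<lambda>t. \<Sum>r\<in>{1..n+m-1}.
          let n1 = sh_n1 \<gamma> n r; m1 = r - n1; g = sh_decomp \<gamma> n m r in
          \<Sum>(a1, a2)\<in>supp (dplus cop x). \<Sum>(b1, b2)\<in>supp (dplus cop y).
            if odeg deg a1 = n1 \<and> odeg deg b1 = m1
            then dplus cop x (a1, a2) * dplus cop y (b1, b2) *
                 tens (oprod mu (fst g) a1 b1) (oprod mu (snd g) a2 b2) t
            else 0))"

definition PF_basis :: "nat list set" where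
  "PF_basis = {f. \<exists>n\<ge>1. is_pf n f}"

definition pq_prod :: "nat list \<Rightarrow> (nat list \<Rightarrow> 'k::field) \<Rightarrow> (nat list \<Rightarrow> 'k) \<Rightarrow> (nat list \<Rightarrow> 'k)" where
  "pq_prod \<gamma> x y = (\<lambda>h. \<Sum>f\<in>supp x. \<Sum>g\<in>supp y.
      x f * y g * bvec (comp_w (times_w f g) \<gamma>) h)"

definition pq_cop :: "(nat list \<Rightarrow> 'k::field) \<Rightarrow> (nat list \<times> nat list \<Rightarrow> 'k)" where
  "pq_cop x = (\<lambda>t. \<Sum>f\<in>supp x. \<Sum>r\<in>{1..<length f}.
      x f * tens (bvec (park (take r f))) (bvec (park (drop r f))) t)"

end

theory Submission
  imports Defs "HOL-Combinatorics.Permutations"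
begin

text \<open>
  Park(h)(i) depends only on the value h(i) and on the multiset of values of h: it is
  park_value h (h i), where park_value h v is the minimum over w \<le> v of
  v - w + 1 + #{j. h j < w}.  From this description Park commutes with permutations of
  positions, fixes parking functions, parks a concatenation of a completable word a with
  a shifted word b blockwise, and satisfies Park(Park(h)|S) = Park(h|S) for every set S
  of positions.

  The first three facts show that the products stay in PQSym and that cutting a shuffled
  word (f \<times> g)\<cdot>\<gamma> after r letters and parking both pieces gives the shuffles, by the two
  components of the decomposition of \<gamma>, of the parked pieces of f and of g; summing over r
  gives the compatibility of \<Delta> with the products.  The last fact gives coassociativity:
  both iterated coproducts of f are the sum over 0 < s < r < n of
  Park(f|[1,s]) \<otimes> Park(f|(s,r]) \<otimes> Park(f|(r,n]).
\<close>

section \<open>Park as a function of the values\<close>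

definition count_less :: "nat list \<Rightarrow> nat \<Rightarrow> nat" where
  "count_less h u = length (filter (\<lambda>x. x < u) h)"

fun park_value :: "nat list \<Rightarrow> nat \<Rightarrow> nat" where
  "park_value h 0 = 1"
| "park_value h (Suc v) = min (park_value h v + 1) (count_less h (Suc v) + 1)"

lemma count_less_mset: "mset h = mset h' \<Longrightarrow> count_less h = count_less h'"
  unfolding count_less_def by (metis mset_filter size_mset)

lemma park_value_cong: "(\<forall>u\<le>v. count_less h u = count_less h' u) \<Longrightarrow> park_value h v = park_value h' v"
  by (induction v) auto

lemma park_value_mset: "mset h = mset h' \<Longrightarrow> park_value h = park_value h'"
  using count_less_mset park_value_cong by (metis ext)

lemma count_less_0 [simp]: "count_less h 0 = 0"
  by (simp add: count_less_def)

lemma count_less_mono: "u \<le> u' \<Longrightarrow> count_less h u \<le> count_less h u'"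
  unfolding count_less_def by (induction h) auto

lemma count_less_le_length: "count_less h u \<le> length h"
  unfolding count_less_def by simp

lemma count_less_lt_length: "v \<in> set h \<Longrightarrow> count_less h v < length h"
  unfolding count_less_def by (rule length_filter_less) auto

lemma count_less_all: "\<forall>x\<in>set a. x < u \<Longrightarrow> count_less a u = length a"
  by (simp add: count_less_def)

lemma count_less_none: "\<forall>x\<in>set a. u \<le> x \<Longrightarrow> count_less a u = 0"
  by (auto simp: count_less_def filter_empty_conv)

lemma count_less_append: "count_less (a @ b) u = count_less a u + count_less b u"
  by (simp add: count_less_def)

lemma count_less_shift: "count_less (map (\<lambda>i. i + n) b) u = count_less b (u - n)"
  by (induction b) (auto simp: count_less_def)

lemma count_less_map: "count_less (map \<phi> h) u = length (filter (\<lambda>x. \<phi> x < u) h)"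
  by (simp add: count_less_def filter_map comp_def)

lemma park_value_le_count_less: "park_value h v \<le> count_less h v + 1"
  by (cases v) auto

lemma park_value_ge_1: "1 \<le> park_value h v"
  by (induction v) auto

lemma park_value_le_Suc: "park_value h v \<le> park_value h (Suc v)"
  using park_value_le_count_less[of h v] count_less_mono[of v "Suc v" h] by auto

lemma park_value_mono: "v \<le> v' \<Longrightarrow> park_value h v \<le> park_value h v'"
  using lift_Suc_mono_le[of "park_value h", OF park_value_le_Suc] .

lemma park_value_less_imp_less: "park_value h x < park_value h y \<Longrightarrow> x < y"
  using park_value_mono by (metis leD leI)

lemma park_value_attained: "\<exists>w\<le>v. park_value h v = v - w + 1 + count_less h w"
proof (induction v)
  case (Suc v)
  then obtain w where "w \<le> v" "park_value h v = v - w + 1 + count_less h w" by auto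
  then show ?case
    by (cases "park_value h (Suc v) = park_value h v + 1")
       (auto intro: exI[of _ w] exI[of _ "Suc v"] simp del: park_value.simps, auto)
qed simp

lemma park_value_lower_bound:
  "(\<forall>u\<le>v. L \<le> v - u + 1 + count_less h u) \<Longrightarrow> L \<le> park_value h v"
proof (induction v arbitrary: L)
  case (Suc v)
  have "\<forall>u\<le>v. L - 1 \<le> v - u + 1 + count_less h u"
  proof (intro allI impI)
    fix u assume "u \<le> v"
    then have "L \<le> Suc v - u + 1 + count_less h u" using Suc.prems by simp
    then show "L - 1 \<le> v - u + 1 + count_less h u" using \<open>u \<le> v\<close> by simp
  qed
  then have "L - 1 \<le> park_value h v" by (rule Suc.IH)
  moreover have "L \<le> count_less h (Suc v) + 1" using Suc.prems by force
  ultimately show ?case by simp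
qed simp

lemma park_value_below_min: "\<forall>x\<in>set h. v \<le> x \<Longrightarrow> park_value h v = 1"
  by (cases v) (simp_all add: count_less_none)

lemma park_value_plateau:
  assumes "\<forall>u. a < u \<and> u \<le> a + t \<longrightarrow> count_less h u = c" "0 < t"
  shows "park_value h (a + t) = min (park_value h a + t) (c + 1)"
  using assms
proof (induction t)
  case (Suc t)
  then show ?case by (cases "t = 0") auto
qed simp

lemma sorted_nth_less_iff:
  "sorted s \<Longrightarrow> i < length s \<Longrightarrow> s ! i < u \<longleftrightarrow> i < count_less s u"
proof (induction s arbitrary: i)
  case (Cons x s)
  show ?case
  proof (cases "x < u")
    case True
    then show ?thesis using Cons by (cases i) (auto simp: count_less_def)
  next
    case False
    then have "filter (\<lambda>y. y < u) s = []" using Cons.prems(1)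
      by (auto simp: filter_empty_conv)
    moreover have "\<not> (x # s) ! i < u" using False Cons.prems
      by (cases i) (auto, meson leD le_less_trans nth_mem)
    ultimately show ?thesis using False by (simp add: count_less_def)
  qed
qed simp

lemma pk_le: "pk s k \<le> k + 1"
  by (cases k) auto

text \<open>Between two consecutive values of a sorted word count_less is constant, so the
  recursion of pk and that of park_value agree.\<close>
lemma pk_eq_park_value: "sorted s \<Longrightarrow> k < length s \<Longrightarrow> pk s k = park_value s (s ! k)"
proof (induction k)
  case 0
  have "\<forall>x\<in>set s. s ! 0 \<le> x" using 0
    by (metis in_set_conv_nth le0 sorted_iff_nth_mono)
  then show ?case using park_value_below_min by simp
next
  case (Suc k)
  let ?a = "s ! k" and ?b = "s ! Suc k"
  have ab: "?a \<le> ?b" using Suc.prems by (simp add: sorted_iff_nth_mono)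
  have IH: "pk s k = park_value s ?a" using Suc by simp
  show ?case
  proof (cases "?a = ?b")
    case True
    then show ?thesis using IH pk_le[of s k] by simp
  next
    case False
    have "count_less s u = Suc k" if "?a < u" "u \<le> ?a + (?b - ?a)" for u
      using sorted_nth_less_iff[of s k u] sorted_nth_less_iff[of s "Suc k" u] that Suc.prems ab
      by simp
    then have "park_value s (?a + (?b - ?a)) = min (park_value s ?a + (?b - ?a)) (Suc k + 1)"
      using park_value_plateau[of ?a "?b - ?a" s "Suc k"] False ab by simp
    then show ?thesis using IH ab by simp
  qed
qed

lemma comp_w_nth: "i < length \<gamma> \<Longrightarrow> comp_w h \<gamma> ! i = h ! (\<gamma> ! i - 1)"
  by (simp add: comp_w_def)

lemma length_comp_w [simp]: "length (comp_w h \<gamma>) = length \<gamma>"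
  by (simp add: comp_w_def)

lemma is_perm_range: "is_perm k \<sigma> \<Longrightarrow> \<forall>i\<in>set \<sigma>. 1 \<le> i \<and> i \<le> k"
  by (auto simp: is_perm_def)

lemma is_perm_length: "is_perm n \<sigma> \<Longrightarrow> length \<sigma> = n"
  unfolding is_perm_def by (metis card_atLeastAtMost diff_Suc_1 distinct_card)

lemma is_permI: "distinct xs \<Longrightarrow> length xs = k \<Longrightarrow> set xs \<subseteq> {1..k} \<Longrightarrow> is_perm k xs"
  unfolding is_perm_def
  by (metis card_atLeastAtMost card_subset_eq distinct_card finite_atLeastAtMost diff_Suc_1)

lemma sort_perm_exists: "\<exists>\<sigma>. is_perm (length h) \<sigma> \<and> h = comp_w (sort h) \<sigma>"
proof -
  obtain p where p: "p permutes {..<length (sort h)}" "permute_list p (sort h) = h"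
    using mset_eq_permutation[of h "sort h"] by auto
  define \<sigma> where "\<sigma> = map (\<lambda>i. p i + 1) [0..<length h]"
  have inj: "inj_on p {..<length h}" using p(1) permutes_inj_on by force
  have img: "p ` {..<length h} = {..<length h}" using p(1) permutes_image by force
  have "distinct \<sigma>" unfolding \<sigma>_def distinct_map
    using inj by (auto simp: inj_on_def atLeast0LessThan)
  moreover have "set \<sigma> = {1..length h}"
  proof -
    have "set \<sigma> = (\<lambda>i. i + 1) ` (p ` {..<length h})"
      unfolding \<sigma>_def by (auto simp: atLeast0LessThan image_image)
    also have "\<dots> = {1..length h}" using img
      by (auto simp: image_iff) (metis Suc_pred le_simps(3) lessThan_iff)
    finally show ?thesis .
  qed
  moreover have "h = comp_w (sort h) \<sigma>"
    using p(2) unfolding \<sigma>_def comp_w_def permute_list_def by (simp add: comp_def)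
  ultimately show ?thesis unfolding is_perm_def by blast
qed

lemma park_eq_map_park_value: "park h = map (park_value h) h"
proof -
  define \<sigma> where "\<sigma> = (SOME \<sigma>. is_perm (length h) \<sigma> \<and> h = comp_w (sort h) \<sigma>)"
  have \<sigma>: "is_perm (length h) \<sigma>" "h = comp_w (sort h) \<sigma>"
    unfolding \<sigma>_def using someI_ex[OF sort_perm_exists] by blast+
  have len: "length \<sigma> = length h" using \<sigma>(1) is_perm_length by blast
  have "park h ! i = park_value h (h ! i)" if i: "i < length h" for i
  proof -
    have "\<sigma> ! i \<in> set \<sigma>" using i len by simp
    then have r: "1 \<le> \<sigma> ! i" "\<sigma> ! i - 1 < length h" using is_perm_range[OF \<sigma>(1)] by fastforce+
    have "park h ! i = pk (sort h) (\<sigma> ! i - 1)"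
      using r i len by (simp add: park_def \<sigma>_def[symmetric] comp_w_nth park_up_def)
    also have "\<dots> = park_value (sort h) (sort h ! (\<sigma> ! i - 1))"
      using r by (intro pk_eq_park_value) auto
    also have "\<dots> = park_value h (h ! i)"
      using park_value_mset[of "sort h" h] comp_w_nth[of i \<sigma> "sort h"] \<sigma>(2) i len by simp
    finally show ?thesis .
  qed
  then show ?thesis by (intro nth_equalityI) (simp_all add: park_def len \<sigma>_def[symmetric])
qed

section \<open>Parking functions and Park\<close>

lemma length_filter_mono_pred:
  "(\<forall>x\<in>set xs. P x \<longrightarrow> Q x) \<Longrightarrow> length (filter P xs) \<le> length (filter Q xs)"
  by (induction xs) auto

lemma length_filter_conj_split:
  "length (filter P xs) = length (filter (\<lambda>x. P x \<and> Q x) xs) + length (filter (\<lambda>x. P x \<and> \<not> Q x) xs)"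
  by (induction xs) auto

lemma length_filter_subset_mset:
  "mset g \<subseteq># mset h \<Longrightarrow> length (filter P g) \<le> length (filter P h)"
  by (metis mset_filter multiset_filter_mono size_mset size_mset_mono)

definition parking :: "nat \<Rightarrow> nat list \<Rightarrow> bool" where
  "parking n f \<longleftrightarrow> length f = n \<and> (\<forall>x\<in>set f. 1 \<le> x \<and> x \<le> n) \<and> (\<forall>k\<le>n. k \<le> count_less f (Suc k))"

lemma parking_length: "parking n f \<Longrightarrow> length f = n"
  by (simp add: parking_def)

lemma sorted_bound_iff_count_less:
  "(\<forall>i<length f. sort f ! i \<le> i + 1) \<longleftrightarrow> (\<forall>k\<le>length f. k \<le> count_less f (Suc k))"
proof -
  have "(\<forall>i<length f. sort f ! i \<le> i + 1) \<longleftrightarrow> (\<forall>i<length f. i < count_less f (i + 2))"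
    using sorted_nth_less_iff[of "sort f"] count_less_mset[of "sort f" f]
    by (auto simp: less_Suc_eq_le[symmetric])
  also have "\<dots> \<longleftrightarrow> (\<forall>k\<le>length f. k \<le> count_less f (Suc k))"
  proof
    assume H: "\<forall>i<length f. i < count_less f (i + 2)"
    show "\<forall>k\<le>length f. k \<le> count_less f (Suc k)"
    proof (intro allI impI)
      fix k assume "k \<le> length f"
      then show "k \<le> count_less f (Suc k)" using H[rule_format, of "k - 1"] by (cases k) auto
    qed
  next
    assume "\<forall>k\<le>length f. k \<le> count_less f (Suc k)"
    then show "\<forall>i<length f. i < count_less f (i + 2)"
      by (metis Suc_le_eq add_2_eq_Suc')
  qed
  finally show ?thesis .
qed

lemma is_pf_iff_parking: "is_pf n f \<longleftrightarrow> parking n f"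
proof (cases "length f = n")
  case True
  have "(\<forall>i<n. 1 \<le> f ! i \<and> f ! i \<le> n) \<longleftrightarrow> (\<forall>x\<in>set f. 1 \<le> x \<and> x \<le> n)"
    using True by (metis in_set_conv_nth)
  then show ?thesis
    using True sorted_bound_iff_count_less[of f] unfolding is_pf_def parking_def by simp
qed (simp add: is_pf_def parking_def)

lemma length_park [simp]: "length (park h) = length h"
  by (simp add: park_eq_map_park_value)

lemma park_Nil_iff: "park l = [] \<longleftrightarrow> l = []"
  by (metis length_0_conv length_park)

lemma park_range: "x \<in> set (park h) \<Longrightarrow> 1 \<le> x \<and> x \<le> length h"
  unfolding park_eq_map_park_value
  using park_value_ge_1 park_value_le_count_less count_less_lt_length
  by (auto) (metis Suc_leI add.commute le_trans plus_1_eq_Suc)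

text \<open>For k > 0 let v0 be the least value with park_value h v0 > k: the letters of h
  below v0 get park values \<le> k, and there are at least k of them.\<close>
lemma count_less_park: "k \<le> length h \<Longrightarrow> k \<le> count_less (park h) (Suc k)"
proof -
  assume k: "k \<le> length h"
  let ?\<phi> = "park_value h"
  have e: "count_less (park h) (Suc k) = length (filter (\<lambda>x. ?\<phi> x \<le> k) h)"
    unfolding park_eq_map_park_value count_less_map by (simp add: less_Suc_eq_le)
  show ?thesis
  proof (cases "\<forall>x\<in>set h. ?\<phi> x \<le> k")
    case True
    then show ?thesis using e k by (simp add: filter_True)
  next
    case False
    then obtain x0 where x0: "k < ?\<phi> x0" by (auto simp: not_le)
    show ?thesis
    proof (cases "k = 0")
      case False
      define v0 where "v0 = (LEAST v. k < ?\<phi> v)"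
      have v0: "k < ?\<phi> v0" unfolding v0_def using x0 by (rule LeastI)
      have "v0 \<noteq> 0" using v0 False by (metis park_value.simps(1) less_one not_less_eq)
      then obtain v1 where v1: "v0 = Suc v1" by (cases v0) auto
      have "\<not> k < ?\<phi> v1"
        unfolding v0_def by (metis Suc_n_not_le_n not_less_Least v0_def v1 le_refl less_Suc_eq_le)
      then have "k \<le> count_less h v0" using v0 v1 by simp
      also have "\<dots> \<le> length (filter (\<lambda>x. ?\<phi> x \<le> k) h)"
        unfolding count_less_def
        by (rule length_filter_mono_pred) (metis not_less_Least v0_def not_le)
      finally show ?thesis using e by simp
    qed simp
  qed
qed

lemma parking_park: "parking (length h) (park h)"
  unfolding parking_def using park_range count_less_park by auto

lemma PF_basis_iff: "f \<in> PF_basis \<longleftrightarrow> 1 \<le> length f \<and> parking (length f) f"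
  unfolding PF_basis_def is_pf_iff_parking parking_def by auto

lemma park_in_PF_basis: "1 \<le> length h \<Longrightarrow> park h \<in> PF_basis"
  unfolding PF_basis_iff using parking_park by simp

lemma park_value_parking: "parking n f \<Longrightarrow> 1 \<le> v \<Longrightarrow> v \<le> Suc n \<Longrightarrow> park_value f v = v"
proof (induction v)
  case (Suc v)
  show ?case
  proof (cases "v = 0")
    case True
    have "count_less f 1 = 0" using Suc.prems(1)
      unfolding parking_def by (intro count_less_none) auto
    then show ?thesis using True by (simp add: numeral_eq_Suc)
  next
    case False
    then show ?thesis using Suc unfolding parking_def by simp
  qed
qed simp

lemma park_parking: "parking n f \<Longrightarrow> park f = f"
  unfolding park_eq_map_park_value
  by (rule map_idI) (metis parking_def park_value_parking le_SucI)

lemma is_perm_mset: "is_perm n \<sigma> \<Longrightarrow> mset \<sigma> = mset [1..<n+1]"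
  unfolding is_perm_def
  by (metis atLeastLessThanSuc_atLeastAtMost distinct_upt set_eq_iff_mset_eq_distinct set_upt Suc_eq_plus1)

lemma map_upt_nth: "map (\<lambda>i. u ! (i - 1)) [1..<length u + 1] = u"
  by (rule nth_equalityI) (simp_all del: upt_Suc)

lemma mset_comp_perm: "is_perm (length u) \<sigma> \<Longrightarrow> mset (comp_w u \<sigma>) = mset u"
proof -
  assume p: "is_perm (length u) \<sigma>"
  have "mset (comp_w u \<sigma>) = image_mset (\<lambda>i. u ! (i - 1)) (mset \<sigma>)" by (simp add: comp_w_def)
  also have "\<dots> = mset (map (\<lambda>i. u ! (i - 1)) [1..<length u + 1])" using is_perm_mset[OF p] by simp
  finally show ?thesis by (simp only: map_upt_nth)
qed

lemma park_comp_perm: "is_perm (length u) \<sigma> \<Longrightarrow> park (comp_w u \<sigma>) = comp_w (park u) \<sigma>"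
  unfolding park_eq_map_park_value park_value_mset[OF mset_comp_perm]
  by (auto simp: comp_w_def dest!: is_perm_range)

lemma parking_comp_perm: "parking k u \<Longrightarrow> is_perm k \<sigma> \<Longrightarrow> parking k (comp_w u \<sigma>)"
proof -
  assume u: "parking k u" and \<sigma>: "is_perm k \<sigma>"
  then have m: "mset (comp_w u \<sigma>) = mset u" using mset_comp_perm by (simp add: parking_def)
  then have "set (comp_w u \<sigma>) = set u" by (metis set_mset_mset)
  moreover have "count_less (comp_w u \<sigma>) = count_less u" using m by (rule count_less_mset)
  ultimately show ?thesis using u is_perm_length[OF \<sigma>] unfolding parking_def by simp
qed

lemma parking_times_w: "parking n f \<Longrightarrow> parking m g \<Longrightarrow> parking (n + m) (times_w f g)"
proof -
  assume f: "parking n f" and g: "parking m g"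
  have c: "k \<le> count_less (times_w f g) (Suc k)" if k: "k \<le> n + m" for k
  proof (cases "k \<le> n")
    case True
    then show ?thesis using f
      by (simp add: times_w_def count_less_append parking_def) (meson le_add1 le_trans)
  next
    case False
    then have "count_less f (Suc k) = n"
      using f by (intro trans[OF count_less_all]) (auto simp: parking_def)
    moreover have "k - n \<le> count_less g (Suc (k - n))" using g k unfolding parking_def by simp
    ultimately show ?thesis
      using False f by (simp add: times_w_def count_less_append count_less_shift Suc_diff_le parking_def)
  qed
  then show ?thesis using f g by (auto simp: times_w_def parking_def)
qed

text \<open>a can be completed to a parking function of size n, e.g. by appending
  n - length a letters 1.\<close>
definition parking_fragment :: "nat \<Rightarrow> nat list \<Rightarrow> bool" where
  "parking_fragment n a \<longleftrightarrow> (\<forall>x\<in>set a. 1 \<le> x \<and> x \<le> n) \<and> length a \<le> n \<and>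
     (\<forall>k\<le>n. k \<le> count_less a (Suc k) + (n - length a))"

lemma parking_append_fragments:
  assumes "parking n (a @ b)"
  shows "parking_fragment n a" and "parking_fragment n b"
proof -
  have l: "length a + length b = n" using assms unfolding parking_def by simp
  have c: "\<forall>k\<le>n. k \<le> count_less a (Suc k) + count_less b (Suc k)"
    using assms unfolding parking_def by (simp add: count_less_append)
  show "parking_fragment n a"
    using assms l c count_less_le_length[of b] unfolding parking_def parking_fragment_def
    by (auto) (metis add_le_mono le_refl le_trans diff_add_inverse)
  show "parking_fragment n b"
    using assms l c count_less_le_length[of a] unfolding parking_def parking_fragment_def
    by (auto) (metis add.commute add_le_mono le_refl le_trans diff_add_inverse)
qed

lemma park_value_fragment_top:
  assumes "parking_fragment n a"
  shows "park_value a (Suc n) = length a + 1"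
proof (rule antisym)
  have "count_less a (Suc n) = length a"
    using assms by (intro count_less_all) (auto simp: parking_fragment_def)
  then show "park_value a (Suc n) \<le> length a + 1"
    using park_value_le_count_less[of a "Suc n"] by simp
  show "length a + 1 \<le> park_value a (Suc n)"
  proof (rule park_value_lower_bound, intro allI impI)
    fix u assume "u \<le> Suc n"
    then show "length a + 1 \<le> Suc n - u + 1 + count_less a u"
      using assms unfolding parking_fragment_def by (cases u) auto
  qed
qed

text \<open>Up to Suc n the shifted letters are invisible; beyond, they are counted on top of
  all of a, whose park values have reached length a + 1 at Suc n.\<close>
lemma park_append_shift:
  assumes a: "parking_fragment n a" and b: "\<forall>x\<in>set b. 1 \<le> x"
  shows "park (a @ map (\<lambda>i. i + n) b) = times_w (park a) (park b)"
proof -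
  let ?c = "a @ map (\<lambda>i. i + n) b"
  have cc: "count_less ?c u = count_less a u + count_less b (u - n)" for u
    by (simp add: count_less_append count_less_shift)
  have low: "park_value ?c v = park_value a v" if "v \<le> Suc n" for v
    using that b by (intro park_value_cong) (auto simp: cc intro!: count_less_none)
  have high: "park_value ?c (n + t) = length a + park_value b t" if "1 \<le> t" for t
    using that
  proof (induction t rule: dec_induct)
    case base
    have "count_less b 1 = 0" using b by (intro count_less_none) auto
    then show ?case
      using low[of "Suc n"] park_value_fragment_top[OF a] by (simp add: numeral_eq_Suc)
  next
    case (step t)
    have "count_less a (Suc (n + t)) = length a"
      using a by (intro count_less_all) (auto simp: parking_fragment_def)
    then show ?case using step cc[of "Suc (n + t)"] by (simp add: Suc_diff_le)
  qed
  have "map (park_value ?c) a = map (park_value a) a"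
    using low a by (intro map_cong) (auto simp: parking_fragment_def)
  moreover have "map (\<lambda>x. park_value ?c (x + n)) b = map (\<lambda>x. length a + park_value b x) b"
    using high b by (intro map_cong) (auto simp: add.commute)
  ultimately show ?thesis
    unfolding park_eq_map_park_value times_w_def by (simp add: comp_def add.commute)
qed

subsection \<open>Parking a sub-multiset of a parked word\<close>

lemma park_value_map_park_value_le:
  "park_value (map (park_value h) g) (park_value h v) \<le> park_value g v"
proof (induction v)
  case 0
  have "count_less (map (park_value h) g) 1 = 0"
    unfolding count_less_map using park_value_ge_1
    by (auto simp: filter_empty_conv) (metis Suc_le_eq)
  then show ?case by (simp add: numeral_eq_Suc)
next
  case (Suc v)
  let ?g = "map (park_value h) g"
  have "park_value ?g (park_value h (Suc v)) \<le> park_value ?g (park_value h v) + 1"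
  proof (cases "park_value h (Suc v) = park_value h v")
    case False
    then have "park_value h (Suc v) = Suc (park_value h v)"
      using park_value_le_Suc[of h v] by simp
    then show ?thesis by simp
  qed (simp del: park_value.simps)
  moreover have "count_less ?g (park_value h (Suc v)) \<le> count_less g (Suc v)"
    unfolding count_less_map unfolding count_less_def
    by (intro length_filter_mono_pred ballI impI) (erule park_value_less_imp_less)
  ultimately show ?case
    using Suc.IH park_value_le_count_less[of ?g "park_value h (Suc v)"] by simp
qed

text \<open>The case where the minimum defining park_value h v is attained at w = v.  The letters
  of g below v either are parked below w (at most count_less (map (park_value h) g) w of
  them) or are among the letters of h below v parked at \<ge> w, of which there are at most
  count_less h v - (w - 1) by count_less_park.\<close>
lemma park_value_le_map_park_value_capped:
  assumes sub: "mset g \<subseteq># mset h" and cap: "park_value h v = count_less h v + 1"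
    and w: "w \<le> park_value h v"
  shows "park_value g v \<le> park_value h v - w + 1 + count_less (map (park_value h) g) w"
proof -
  let ?\<phi> = "park_value h"
  let ?low = "\<lambda>x. x < v \<and> ?\<phi> x < w" and ?high = "\<lambda>x. x < v \<and> \<not> ?\<phi> x < w"
  have g_split: "count_less g v = length (filter ?low g) + length (filter ?high g)"
    unfolding count_less_def by (rule length_filter_conj_split)
  have h_split: "count_less h v = length (filter ?low h) + length (filter ?high h)"
    unfolding count_less_def by (rule length_filter_conj_split)
  have "length (filter ?low g) \<le> count_less (map ?\<phi> g) w"
    unfolding count_less_map by (rule length_filter_mono_pred) auto
  moreover have "length (filter ?high g) \<le> length (filter ?high h)"
    by (rule length_filter_subset_mset[OF sub])
  moreover have "w - 1 \<le> length (filter ?low h)"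
  proof -
    have "filter ?low h = filter (\<lambda>x. ?\<phi> x < w) h"
      using w park_value_less_imp_less[of h _ v] by (intro filter_cong) auto
    moreover have "w - 1 \<le> length h"
      using w cap count_less_le_length[of h v] by simp
    ultimately show ?thesis
      using count_less_park[of "w - 1" h] unfolding park_eq_map_park_value count_less_map
      by (cases w) simp_all
  qed
  ultimately show ?thesis
    using g_split h_split cap w park_value_le_count_less[of g v] by linarith
qed

lemma park_value_le_map_park_value:
  assumes sub: "mset g \<subseteq># mset h"
  shows "w \<le> park_value h v \<Longrightarrow>
    park_value g v \<le> park_value h v - w + 1 + count_less (map (park_value h) g) w"
proof (induction v arbitrary: w)
  case (Suc v)
  let ?\<phi> = "park_value h"
  show ?case
  proof (cases "?\<phi> (Suc v) = count_less h (Suc v) + 1")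
    case True
    then show ?thesis using park_value_le_map_park_value_capped[OF sub True Suc.prems] by simp
  next
    case uncapped: False
    then have step: "?\<phi> (Suc v) = ?\<phi> v + 1" by auto
    show ?thesis
    proof (cases "w \<le> ?\<phi> v")
      case True
      then show ?thesis using Suc.IH[OF True] step by simp
    next
      case False
      then have "w = ?\<phi> (Suc v)" using Suc.prems step by simp
      moreover have "count_less g (Suc v) \<le> count_less (map ?\<phi> g) (?\<phi> (Suc v))"
        unfolding count_less_map unfolding count_less_def
        by (intro length_filter_mono_pred ballI impI)
           (metis step park_value_mono less_Suc_eq_le le_imp_less_Suc add.commute plus_1_eq_Suc)
      ultimately show ?thesis using park_value_le_count_less[of g "Suc v"] by simp
    qed
  qed
qed simp

lemma park_map_park_value:
  assumes sub: "mset g \<subseteq># mset h"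
  shows "park (map (park_value h) g) = park g"
proof -
  have "park_value (map (park_value h) g) (park_value h v) = park_value g v" for v
  proof (rule antisym)
    show "park_value (map (park_value h) g) (park_value h v) \<le> park_value g v"
      by (rule park_value_map_park_value_le)
    obtain w where "w \<le> park_value h v"
      "park_value (map (park_value h) g) (park_value h v)
        = park_value h v - w + 1 + count_less (map (park_value h) g) w"
      using park_value_attained by blast
    then show "park_value g v \<le> park_value (map (park_value h) g) (park_value h v)"
      using park_value_le_map_park_value[OF sub] by simp
  qed
  then show ?thesis unfolding park_eq_map_park_value by simp
qed

lemma park_take_park: "park (take s (park h)) = park (take s h)"
  unfolding park_eq_map_park_value[of h] take_map
  by (rule park_map_park_value) (metis append_take_drop_id mset_append mset_subset_eq_add_left)

lemma park_drop_park: "park (drop s (park h)) = park (drop s h)"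
  unfolding park_eq_map_park_value[of h] drop_map
  by (rule park_map_park_value) (metis append_take_drop_id mset_append mset_subset_eq_add_right)

section \<open>Decomposition of shuffles\<close>

declare upt_Suc [simp del]

lemma length_times_w [simp]: "length (times_w a b) = length a + length b"
  by (simp add: times_w_def)

lemma times_w_nth: "k < length a + length b \<Longrightarrow>
  times_w a b ! k = (if k < length a then a ! k else b ! (k - length a) + length a)"
  by (simp add: times_w_def nth_append)

lemma length_idp [simp]: "length (idp n) = n"
  by (simp add: idp_def)

lemma idp_nth: "k < n \<Longrightarrow> idp n ! k = Suc k"
  by (simp add: idp_def)

lemma length_eps [simp]: "length (eps a b) = a + b"
  by (simp add: eps_def)

lemma eps_nth: "k < a + b \<Longrightarrow> eps a b ! k = (if k < b then a + k + 1 else k - b + 1)"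
  by (simp add: eps_def nth_append)

abbreviation shuffled :: "nat list \<Rightarrow> nat list \<Rightarrow> nat list \<Rightarrow> nat list" where
  "shuffled \<gamma> f g \<equiv> comp_w (times_w f g) \<gamma>"

lemma sorted_wrt_filter:
  "(\<forall>p q. p < q \<and> q < length xs \<and> P (xs ! p) \<and> P (xs ! q) \<longrightarrow> xs ! p < xs ! q)
   \<Longrightarrow> sorted_wrt (<) (filter P xs)"
proof (induction xs)
  case (Cons x xs)
  have "sorted_wrt (<) (filter P xs)"
  proof (rule Cons.IH, intro allI impI)
    fix p q assume "p < q \<and> q < length xs \<and> P (xs ! p) \<and> P (xs ! q)"
    then show "xs ! p < xs ! q" using Cons.prems[rule_format, of "Suc p" "Suc q"] by simp
  qed
  moreover have "x < y" if y: "y \<in> set xs" and P: "P x" "P y" for y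
  proof -
    obtain q where "q < length xs" "xs ! q = y" using y by (auto simp: in_set_conv_nth)
    then show "x < y" using Cons.prems[rule_format, of 0 "Suc q"] P by simp
  qed
  ultimately show ?case by auto
qed simp

lemma filter_eq_upt:
  assumes "\<forall>p q. p < q \<and> q < length xs \<and> P (xs ! p) \<and> P (xs ! q) \<longrightarrow> xs ! p < xs ! q"
    and "set (filter P xs) = {a..<b}"
  shows "filter P xs = [a..<b]"
  using sorted_wrt_filter[OF assms(1)] assms(2)
  by (intro sorted_distinct_set_unique) (simp_all add: strict_sorted_iff)

lemma Sh_perm: "\<gamma> \<in> Sh n m \<Longrightarrow> is_perm (n + m) \<gamma>"
  by (simp add: Sh_def)

lemma Sh_length: "\<gamma> \<in> Sh n m \<Longrightarrow> length \<gamma> = n + m"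
  using Sh_perm is_perm_length by blast

lemma Sh_ord:
  "\<gamma> \<in> Sh n m \<Longrightarrow> p < q \<Longrightarrow> q < length \<gamma> \<Longrightarrow> (\<gamma> ! p \<le> n \<longleftrightarrow> \<gamma> ! q \<le> n) \<Longrightarrow> \<gamma> ! p < \<gamma> ! q"
  by (simp add: Sh_def)

lemma Sh_filter_le: "\<gamma> \<in> Sh n m \<Longrightarrow> filter (\<lambda>v. v \<le> n) \<gamma> = [1..<n+1]"
  by (rule filter_eq_upt) (auto intro: Sh_ord simp: Sh_def is_perm_def)

lemma Sh_filter_gt: "\<gamma> \<in> Sh n m \<Longrightarrow> filter (\<lambda>v. \<not> v \<le> n) \<gamma> = [n+1..<n+m+1]"
  by (rule filter_eq_upt) (auto intro: Sh_ord simp: Sh_def is_perm_def)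

lemma Sh_0_left: "\<tau> \<in> Sh 0 m \<Longrightarrow> \<tau> = [1..<m+1]"
  using Sh_filter_gt[of \<tau> 0 m] Sh_perm[of \<tau> 0 m] by (simp add: is_perm_def filter_True)

lemma Sh_0_right: "\<tau> \<in> Sh n 0 \<Longrightarrow> \<tau> = [1..<n+1]"
  using Sh_filter_le[of \<tau> n 0] Sh_perm[of \<tau> n 0] by (simp add: is_perm_def filter_True)

lemma append_eq_upt:
  "A @ B = [a..<b] \<Longrightarrow> a \<le> b \<Longrightarrow> A = [a..<a + length A] \<and> B = [a + length A..<b]"
proof -
  assume e: "A @ B = [a..<b]" and ab: "a \<le> b"
  have "A = take (length A) [a..<b]" using e by (metis append_eq_conv_conj)
  moreover have "B = drop (length A) [a..<b]" using e by (metis append_eq_conv_conj)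
  moreover have "length A \<le> b - a" using e by (metis le_add1 length_append length_upt)
  moreover have "a + length A \<le> b"
    using e by (metis le_add1 length_append length_upt le_diff_conv2 add.commute ab)
  ultimately show ?thesis by (simp add: take_upt drop_upt min_def)
qed

text \<open>The first r letters of a shuffle \<gamma> \<in> Sh(n,m) are the values 1..n1 and n+1..n+m1, each
  block in increasing order, and the remaining letters are n1+1..n and n+m1+1..n+m.
  Relabelling both parts order-preservingly gives the components gamma1 and gamma2 of the
  decomposition of \<gamma>, and undoing the relabelling is the permutation
  1_n1 \<times> \<epsilon>_(n-n1,m1) \<times> 1_(m-m1), called block_perm below.\<close>
locale shuffle_cut =
  fixes \<gamma> n m r
  assumes g: "\<gamma> \<in> Sh n m" and r: "r \<le> n + m"
begin

definition n1 where "n1 = sh_n1 \<gamma> n r"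
definition m1 where "m1 = r - n1"

lemma length_prefix: "length (take r \<gamma>) = r"
  using Sh_length[OF g] r by simp

lemma length_suffix: "length (drop r \<gamma>) = n + m - r"
  using Sh_length[OF g] r by simp

lemma length_prefix_low: "length (filter (\<lambda>v. v \<le> n) (take r \<gamma>)) = n1"
  by (simp add: n1_def sh_n1_def)

lemma length_prefix_high: "length (filter (\<lambda>v. \<not> v \<le> n) (take r \<gamma>)) = m1"
  using sum_length_filter_compl[of "\<lambda>v. v \<le> n" "take r \<gamma>"] length_prefix length_prefix_low m1_def by simp

lemma filter_low:
  "filter (\<lambda>v. v \<le> n) (take r \<gamma>) = [1..<1+n1] \<and> filter (\<lambda>v. v \<le> n) (drop r \<gamma>) = [1+n1..<n+1]"
proof -
  have "filter (\<lambda>v. v \<le> n) (take r \<gamma>) @ filter (\<lambda>v. v \<le> n) (drop r \<gamma>) = [1..<n+1]"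
    using Sh_filter_le[OF g] by (metis append_take_drop_id filter_append)
  then show ?thesis using append_eq_upt length_prefix_low by fastforce
qed

lemma filter_high:
  "filter (\<lambda>v. \<not> v \<le> n) (take r \<gamma>) = [n+1..<n+1+m1] \<and>
   filter (\<lambda>v. \<not> v \<le> n) (drop r \<gamma>) = [n+1+m1..<n+m+1]"
proof -
  have "filter (\<lambda>v. \<not> v \<le> n) (take r \<gamma>) @ filter (\<lambda>v. \<not> v \<le> n) (drop r \<gamma>) = [n+1..<n+m+1]"
    using Sh_filter_gt[OF g] by (metis append_take_drop_id filter_append)
  then show ?thesis using append_eq_upt length_prefix_high by fastforce
qed

lemma n1_le: "n1 \<le> n"
proof -
  have "length (filter (\<lambda>v. v \<le> n) (take r \<gamma>)) \<le> length (filter (\<lambda>v. v \<le> n) \<gamma>)"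
    by (metis append_take_drop_id filter_append le_add1 length_append)
  then show ?thesis using Sh_filter_le[OF g] length_prefix_low by simp
qed

lemma m1_le: "m1 \<le> m"
proof -
  have "length (filter (\<lambda>v. \<not> v \<le> n) (take r \<gamma>)) \<le> length (filter (\<lambda>v. \<not> v \<le> n) \<gamma>)"
    by (metis append_take_drop_id filter_append le_add1 length_append)
  then show ?thesis using Sh_filter_gt[OF g] length_prefix_high by simp
qed

lemma r_eq: "r = n1 + m1" using m1_def length_prefix_low length_prefix
  by (metis add_diff_inverse_nat length_filter_le not_less)

lemma prefix_range: "v \<in> set (take r \<gamma>) \<Longrightarrow> 1 \<le> v \<and> (v \<le> n \<longrightarrow> v \<le> n1) \<and> (\<not> v \<le> n \<longrightarrow> v \<le> n + m1)"
proof -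
  assume v: "v \<in> set (take r \<gamma>)"
  show ?thesis
  proof (cases "v \<le> n")
    case True
    then have "v \<in> set (filter (\<lambda>v. v \<le> n) (take r \<gamma>))" using v by simp
    then show ?thesis using filter_low True by auto
  next
    case False
    then have "v \<in> set (filter (\<lambda>v. \<not> v \<le> n) (take r \<gamma>))" using v by simp
    then show ?thesis using filter_high False by auto
  qed
qed

lemma suffix_range: "v \<in> set (drop r \<gamma>) \<Longrightarrow> (v \<le> n \<longrightarrow> n1 < v) \<and> (\<not> v \<le> n \<longrightarrow> n + m1 < v \<and> v \<le> n + m)"
proof -
  assume v: "v \<in> set (drop r \<gamma>)"
  show ?thesis
  proof (cases "v \<le> n")
    case True
    then have "v \<in> set (filter (\<lambda>v. v \<le> n) (drop r \<gamma>))" using v by simp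
    then show ?thesis using filter_low True by auto
  next
    case False
    then have "v \<in> set (filter (\<lambda>v. \<not> v \<le> n) (drop r \<gamma>))" using v by simp
    then show ?thesis using filter_high False by auto
  qed
qed

definition std1 where "std1 v = (if v \<le> n then v else v - n + n1)"
definition std2 where "std2 v = (if v \<le> n then v - n1 else v - n1 - m1)"

definition gamma1 where "gamma1 = map std1 (take r \<gamma>)"
definition gamma2 where "gamma2 = map std2 (drop r \<gamma>)"

lemma distinct_gamma: "distinct \<gamma>"
  using Sh_perm[OF g] by (simp add: is_perm_def)

lemma gamma1_Sh: "gamma1 \<in> Sh n1 m1"
proof -
  have inj: "inj_on std1 (set (take r \<gamma>))"
  proof (rule inj_onI)
    fix x y assume x: "x \<in> set (take r \<gamma>)" and y: "y \<in> set (take r \<gamma>)" and e: "std1 x = std1 y"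
    show "x = y" using prefix_range[OF x] prefix_range[OF y] e n1_le
      unfolding std1_def by (auto split: if_splits)
  qed
  have d: "distinct gamma1" unfolding gamma1_def
    using inj distinct_gamma by (simp add: distinct_map distinct_take)
  have l: "length gamma1 = n1 + m1" unfolding gamma1_def using length_prefix r_eq by simp
  have s: "set gamma1 \<subseteq> {1..n1 + m1}"
  proof
    fix y assume "y \<in> set gamma1"
    then obtain v where v: "v \<in> set (take r \<gamma>)" "y = std1 v" unfolding gamma1_def by auto
    then show "y \<in> {1..n1 + m1}" using prefix_range[OF v(1)] n1_le unfolding std1_def by auto
  qed
  have p: "is_perm (n1 + m1) gamma1" using is_permI d l s by blast
  have blk: "v \<in> set (take r \<gamma>) \<Longrightarrow> (std1 v \<le> n1 \<longleftrightarrow> v \<le> n)" for v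
    unfolding std1_def using prefix_range by auto
  have o: "gamma1 ! p < gamma1 ! q" if pq: "p < q" "q < length gamma1" "(gamma1 ! p \<le> n1) = (gamma1 ! q \<le> n1)" for p q
  proof -
    have qr: "q < r" using pq l r_eq by simp
    have gp: "gamma1 ! p = std1 (\<gamma> ! p)" "gamma1 ! q = std1 (\<gamma> ! q)" unfolding gamma1_def
      using pq qr length_prefix by auto
    have mem: "\<gamma> ! p \<in> set (take r \<gamma>)" "\<gamma> ! q \<in> set (take r \<gamma>)"
      using nth_mem[of p "take r \<gamma>"] nth_mem[of q "take r \<gamma>"] pq qr length_prefix by simp_all
    have "(\<gamma> ! p \<le> n) = (\<gamma> ! q \<le> n)" using blk mem pq(3) gp by simp
    then have "\<gamma> ! p < \<gamma> ! q" using Sh_ord[OF g pq(1)] qr length_prefix by simp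
    then show ?thesis using gp unfolding std1_def
      using \<open>(\<gamma> ! p \<le> n) = (\<gamma> ! q \<le> n)\<close> mem prefix_range by auto
  qed
  show ?thesis unfolding Sh_def using p o by blast
qed

lemma gamma2_Sh: "gamma2 \<in> Sh (n - n1) (m - m1)"
proof -
  have inj: "inj_on std2 (set (drop r \<gamma>))"
  proof (rule inj_onI)
    fix x y assume x: "x \<in> set (drop r \<gamma>)" and y: "y \<in> set (drop r \<gamma>)" and e: "std2 x = std2 y"
    show "x = y" using suffix_range[OF x] suffix_range[OF y] e n1_le
      unfolding std2_def by (auto split: if_splits)
  qed
  have d: "distinct gamma2" unfolding gamma2_def
    using inj distinct_gamma by (simp add: distinct_map distinct_drop)
  have l: "length gamma2 = (n - n1) + (m - m1)" unfolding gamma2_def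
    using length_suffix r_eq n1_le m1_le by simp
  have s: "set gamma2 \<subseteq> {1..(n - n1) + (m - m1)}"
  proof
    fix y assume "y \<in> set gamma2"
    then obtain v where v: "v \<in> set (drop r \<gamma>)" "y = std2 v" unfolding gamma2_def by auto
    then show "y \<in> {1..(n - n1) + (m - m1)}"
      using suffix_range[OF v(1)] n1_le m1_le unfolding std2_def by auto
  qed
  have p: "is_perm ((n - n1) + (m - m1)) gamma2" using is_permI d l s by blast
  have blk: "v \<in> set (drop r \<gamma>) \<Longrightarrow> (std2 v \<le> n - n1 \<longleftrightarrow> v \<le> n)" for v
    unfolding std2_def using suffix_range n1_le by fastforce
  have o: "gamma2 ! p < gamma2 ! q" if pq: "p < q" "q < length gamma2" "(gamma2 ! p \<le> n - n1) = (gamma2 ! q \<le> n - n1)" for p q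
  proof -
    have qr: "r + q < n + m" using pq l r_eq n1_le m1_le by simp
    have pl: "q < length (drop r \<gamma>)" "p < length (drop r \<gamma>)"
      using pq l length_suffix r_eq n1_le m1_le by simp_all
    have gp: "gamma2 ! p = std2 (\<gamma> ! (r + p))" "gamma2 ! q = std2 (\<gamma> ! (r + q))"
      unfolding gamma2_def using pl r Sh_length[OF g] by simp_all
    have mem: "\<gamma> ! (r + p) \<in> set (drop r \<gamma>)" "\<gamma> ! (r + q) \<in> set (drop r \<gamma>)"
      using nth_mem[of p "drop r \<gamma>"] nth_mem[of q "drop r \<gamma>"] pq qr length_suffix l by simp_all
    have "(\<gamma> ! (r + p) \<le> n) = (\<gamma> ! (r + q) \<le> n)" using blk mem pq(3) gp by simp
    then have "\<gamma> ! (r + p) < \<gamma> ! (r + q)"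
      using Sh_ord[OF g, of "r + p" "r + q"] pq(1) qr Sh_length[OF g] by simp
    then show ?thesis using gp unfolding std2_def
      using \<open>(\<gamma> ! (r + p) \<le> n) = (\<gamma> ! (r + q) \<le> n)\<close> suffix_range[OF mem(1)] suffix_range[OF mem(2)] n1_le by auto
  qed
  show ?thesis unfolding Sh_def using p o by blast
qed

definition block_perm where
  "block_perm = times_w (times_w (idp n1) (eps (n - n1) m1)) (idp (m - m1))"

lemma block_perm_nth: "k < n + m \<Longrightarrow> block_perm ! k =
  (if k < n1 then k + 1 else if k < n1 + m1 then n + (k - n1) + 1 else if k < n + m1 then k - m1 + 1 else k + 1)"
proof -
  assume k: "k < n + m"
  have l1: "length (times_w (idp n1) (eps (n - n1) m1)) = n + m1" using n1_le by simp
  show ?thesis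
  proof (cases "k < n + m1")
    case True
    then have "block_perm ! k = times_w (idp n1) (eps (n - n1) m1) ! k"
      unfolding block_perm_def using l1 k m1_le by (simp add: times_w_nth)
    also have "\<dots> = (if k < n1 then k + 1 else eps (n - n1) m1 ! (k - n1) + n1)"
      using True n1_le by (simp add: times_w_nth idp_nth)
    finally show ?thesis using True n1_le by (auto simp: eps_nth)
  next
    case False
    then have "block_perm ! k = idp (m - m1) ! (k - (n + m1)) + (n + m1)"
      unfolding block_perm_def using l1 k m1_le by (simp add: times_w_nth)
    then show ?thesis using False k n1_le by (simp add: idp_nth)
  qed
qed

definition block_perm_inv where
  "block_perm_inv v =
     (if v \<le> n1 then v else if v \<le> n then v + m1 else if v \<le> n + m1 then v - n + n1 else v)"

lemma block_perm_block_perm_inv: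
  "1 \<le> v \<Longrightarrow> v \<le> n + m \<Longrightarrow>
    1 \<le> block_perm_inv v \<and> block_perm_inv v \<le> n + m \<and> block_perm ! (block_perm_inv v - 1) = v"
proof -
  assume v: "1 \<le> v" "v \<le> n + m"
  have b: "1 \<le> block_perm_inv v \<and> block_perm_inv v \<le> n + m"
    unfolding block_perm_inv_def using v n1_le m1_le by auto
  then have "block_perm ! (block_perm_inv v - 1) = v"
    using block_perm_nth[of "block_perm_inv v - 1"] v n1_le m1_le
    unfolding block_perm_inv_def by (auto split: if_splits)
  then show ?thesis using b by simp
qed

lemma block_perm_inv_block_perm: "1 \<le> a \<Longrightarrow> a \<le> n + m \<Longrightarrow> block_perm_inv (block_perm ! (a - 1)) = a"
  using block_perm_nth[of "a - 1"] n1_le m1_le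
    unfolding block_perm_inv_def by (auto split: if_splits)

lemma times_gamma12: "times_w gamma1 gamma2 = map block_perm_inv \<gamma>"
proof -
  have "map std1 (take r \<gamma>) = map block_perm_inv (take r \<gamma>)"
  proof (rule map_cong[OF refl])
    fix v assume "v \<in> set (take r \<gamma>)"
    then show "std1 v = block_perm_inv v"
      using prefix_range[of v] n1_le unfolding std1_def block_perm_inv_def by auto
  qed
  moreover have "map (\<lambda>x. x + r) (map std2 (drop r \<gamma>)) = map block_perm_inv (drop r \<gamma>)"
  proof -
    have "std2 v + r = block_perm_inv v" if "v \<in> set (drop r \<gamma>)" for v
      using suffix_range[OF that] n1_le r_eq unfolding std2_def block_perm_inv_def by auto
    then show ?thesis by simp
  qed
  moreover have "length gamma1 = r" unfolding gamma1_def using length_prefix by simp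
  ultimately show ?thesis unfolding times_w_def gamma1_def gamma2_def
    by (metis append_take_drop_id map_append)
qed

lemma gamma_range: "v \<in> set \<gamma> \<Longrightarrow> 1 \<le> v \<and> v \<le> n + m"
  using Sh_perm[OF g] unfolding is_perm_def by auto

lemma gamma_decomp: "\<gamma> = comp_w block_perm (times_w gamma1 gamma2)"
  unfolding times_gamma12 comp_w_def using block_perm_block_perm_inv gamma_range
  by (simp add: map_idI)

lemma gamma_decomp_unique:
  assumes "g1' \<in> Sh n1 m1" "g2' \<in> Sh (n - n1) (m - m1)" "\<gamma> = comp_w block_perm (times_w g1' g2')"
  shows "g1' = gamma1 \<and> g2' = gamma2"
proof -
  let ?X = "times_w g1' g2'"
  have lg1: "length g1' = r" using Sh_length[OF assms(1)] r_eq by simp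
  have rng: "\<forall>x\<in>set ?X. 1 \<le> x \<and> x \<le> n + m"
    using Sh_perm[OF assms(1)] Sh_perm[OF assms(2)] n1_le m1_le lg1 r_eq
      unfolding is_perm_def times_w_def
    by auto
  have "map block_perm_inv \<gamma> = map block_perm_inv (comp_w block_perm ?X)"
    using assms(3) by simp
  also have "\<dots> = map (\<lambda>x. block_perm_inv (block_perm ! (x - 1))) ?X"
    by (simp add: comp_w_def comp_def)
  also have "\<dots> = ?X" using rng block_perm_inv_block_perm by (simp add: map_idI)
  finally have X: "?X = times_w gamma1 gamma2" using times_gamma12 by simp
  have lg: "length gamma1 = r" unfolding gamma1_def using length_prefix by simp
  have "g1' = gamma1" using X lg lg1 unfolding times_w_def by simp
  moreover have "g2' = gamma2"
  proof -
    have "map (\<lambda>i. i + r) g2' = map (\<lambda>i. i + r) gamma2" using X lg lg1 unfolding times_w_def by simp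
    then show ?thesis by (simp add: inj_map_eq_map inj_on_def)
  qed
  ultimately show ?thesis by simp
qed

lemma sh_decomp_eq: "sh_decomp \<gamma> n m r = (gamma1, gamma2)"
proof -
  have "(THE (a, b). a \<in> Sh n1 m1 \<and> b \<in> Sh (n - n1) (m - m1) \<and>
       \<gamma> = comp_w block_perm (times_w a b)) = (gamma1, gamma2)"
  proof (rule the_equality)
    show "case (gamma1, gamma2) of (a, b) \<Rightarrow> a \<in> Sh n1 m1 \<and> b \<in> Sh (n - n1) (m - m1) \<and>
       \<gamma> = comp_w block_perm (times_w a b)"
      unfolding prod.case using gamma1_Sh gamma2_Sh gamma_decomp by blast
  next
    fix x assume H: "case x of (a, b) \<Rightarrow> a \<in> Sh n1 m1 \<and> b \<in> Sh (n - n1) (m - m1) \<and>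
       \<gamma> = comp_w block_perm (times_w a b)"
    obtain a b where x: "x = (a, b)" by (cases x)
    have H': "a \<in> Sh n1 m1 \<and> b \<in> Sh (n - n1) (m - m1) \<and> \<gamma> = comp_w block_perm (times_w a b)"
      using H unfolding x prod.case .
    show "x = (gamma1, gamma2)" using gamma_decomp_unique[of a b] H' x by blast
  qed
  then show ?thesis unfolding sh_decomp_def Let_def n1_def[symmetric] m1_def[symmetric]
    block_perm_def[symmetric] .
qed

lemma take_shuffled:
  assumes "length f = n" "length h = m"
  shows "take r (comp_w (times_w f h) \<gamma>) = comp_w (take n1 f @ map (\<lambda>i. i + n) (take m1 h)) gamma1"
proof -
  let ?u = "take n1 f @ map (\<lambda>i. i + n) (take m1 h)"
  have "take r (comp_w (times_w f h) \<gamma>) = map (\<lambda>v. times_w f h ! (v - 1)) (take r \<gamma>)"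
    by (simp add: comp_w_def take_map)
  also have "\<dots> = map (\<lambda>v. ?u ! (std1 v - 1)) (take r \<gamma>)"
  proof (rule map_cong[OF refl])
    fix v assume v: "v \<in> set (take r \<gamma>)"
    note s = prefix_range[OF v]
    have vv: "v \<le> n + m" using v gamma_range by (meson in_set_takeD)
    show "times_w f h ! (v - 1) = ?u ! (std1 v - 1)"
    proof (cases "v \<le> n")
      case True
      then have v1: "1 \<le> v" "v \<le> n1" using s by auto
      have "v - 1 < length f" using v1 n1_le assms by linarith
      then have e1: "times_w f h ! (v - 1) = f ! (v - 1)" using times_w_nth[of "v - 1" f h] by simp
      have i: "v - 1 < length (take n1 f)" using v1 assms n1_le by simp
      have e2: "?u ! (v - 1) = f ! (v - 1)" using nth_append[of "take n1 f" _ "v - 1"] i by simp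
      show ?thesis using e1 e2 True unfolding std1_def by simp
    next
      case False
      then have v1: "n < v" "v \<le> n + m1" using s by auto
      have j: "\<not> v - 1 < length f" "v - 1 < length f + length h" using assms v1 m1_le by simp_all
      have e1: "times_w f h ! (v - 1) = h ! (v - 1 - n) + n"
        using times_w_nth[of "v - 1" f h] j assms by simp
      have i: "\<not> v - n + n1 - 1 < length (take n1 f)" "v - n + n1 - 1 - length (take n1 f) = v - 1 - n"
        "v - 1 - n < length (take m1 h)" using v1 assms n1_le m1_le by simp_all
      have e2: "?u ! (v - n + n1 - 1) = h ! (v - 1 - n) + n"
        unfolding nth_append if_not_P[OF i(1)] i(2) using i(3) m1_le assms by simp
      show ?thesis using e1 e2 False unfolding std1_def by simp
    qed
  qed
  also have "\<dots> = comp_w ?u gamma1" by (simp add: comp_w_def gamma1_def)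
  finally show ?thesis .
qed

lemma drop_shuffled:
  assumes "length f = n" "length h = m"
  shows "drop r (comp_w (times_w f h) \<gamma>) = comp_w (drop n1 f @ map (\<lambda>i. i + n) (drop m1 h)) gamma2"
proof -
  let ?u = "drop n1 f @ map (\<lambda>i. i + n) (drop m1 h)"
  have "drop r (comp_w (times_w f h) \<gamma>) = map (\<lambda>v. times_w f h ! (v - 1)) (drop r \<gamma>)"
    by (simp add: comp_w_def drop_map)
  also have "\<dots> = map (\<lambda>v. ?u ! (std2 v - 1)) (drop r \<gamma>)"
  proof (rule map_cong[OF refl])
    fix v assume v: "v \<in> set (drop r \<gamma>)"
    note s = suffix_range[OF v]
    have vv: "1 \<le> v \<and> v \<le> n + m" using v gamma_range by (meson in_set_dropD)
    show "times_w f h ! (v - 1) = ?u ! (std2 v - 1)"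
    proof (cases "v \<le> n")
      case True
      then have v1: "n1 < v" "v \<le> n" using s by auto
      have "v - 1 < length f" using v1 n1_le assms by linarith
      then have e1: "times_w f h ! (v - 1) = f ! (v - 1)" using times_w_nth[of "v - 1" f h] by simp
      have i: "v - n1 - 1 < length (drop n1 f)" "n1 + (v - n1 - 1) = v - 1"
        using v1 assms n1_le by simp_all
      have e2: "?u ! (v - n1 - 1) = f ! (v - 1)"
        using nth_append[of "drop n1 f" _ "v - n1 - 1"] i by simp
      show ?thesis using e1 e2 True unfolding std2_def by simp
    next
      case False
      then have v1: "n + m1 < v" "v \<le> n + m" using s by auto
      have j: "\<not> v - 1 < length f" "v - 1 < length f + length h" using assms v1 m1_le by simp_all
      have e1: "times_w f h ! (v - 1) = h ! (v - 1 - n) + n"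
        using times_w_nth[of "v - 1" f h] j assms by simp
      have i: "\<not> v - n1 - m1 - 1 < length (drop n1 f)" "v - n1 - m1 - 1 - length (drop n1 f) = v - 1 - n - m1"
        "v - 1 - n - m1 < length (drop m1 h)" "m1 + (v - 1 - n - m1) = v - 1 - n"
          using v1 assms n1_le m1_le by simp_all
      have e2: "?u ! (v - n1 - m1 - 1) = h ! (v - 1 - n) + n"
        unfolding nth_append if_not_P[OF i(1)] i(2) using i(3) i(4) m1_le assms by simp
      show ?thesis using e1 e2 False unfolding std2_def by simp
    qed
  qed
  also have "\<dots> = comp_w ?u gamma2" by (simp add: comp_w_def gamma2_def)
  finally show ?thesis .
qed

lemma park_take_shuffled:
  assumes f: "parking n f" and h: "parking m h"
  shows "park (take r (shuffled \<gamma> f h)) = shuffled gamma1 (park (take n1 f)) (park (take m1 h))"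
proof -
  let ?u = "take n1 f @ map (\<lambda>i. i + n) (take m1 h)"
  have perm: "is_perm (length ?u) gamma1"
    using Sh_perm[OF gamma1_Sh] n1_le m1_le parking_length[OF f] parking_length[OF h] by simp
  have fragment: "parking_fragment n (take n1 f)"
    using parking_append_fragments(1)[of n "take n1 f" "drop n1 f"] f by simp
  have positive: "\<forall>x\<in>set (take m1 h). 1 \<le> x"
    using h unfolding parking_def by (meson in_set_takeD)
  have "park (take r (shuffled \<gamma> f h)) = park (comp_w ?u gamma1)"
    using take_shuffled parking_length[OF f] parking_length[OF h] by simp
  also have "\<dots> = comp_w (park ?u) gamma1" using park_comp_perm[OF perm] .
  also have "park ?u = times_w (park (take n1 f)) (park (take m1 h))"
    using park_append_shift[OF fragment positive] .
  finally show ?thesis .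
qed

lemma park_drop_shuffled:
  assumes f: "parking n f" and h: "parking m h"
  shows "park (drop r (shuffled \<gamma> f h)) = shuffled gamma2 (park (drop n1 f)) (park (drop m1 h))"
proof -
  let ?u = "drop n1 f @ map (\<lambda>i. i + n) (drop m1 h)"
  have perm: "is_perm (length ?u) gamma2"
    using Sh_perm[OF gamma2_Sh] n1_le m1_le parking_length[OF f] parking_length[OF h] by simp
  have fragment: "parking_fragment n (drop n1 f)"
    using parking_append_fragments(2)[of n "take n1 f" "drop n1 f"] f by simp
  have positive: "\<forall>x\<in>set (drop m1 h). 1 \<le> x"
    using h unfolding parking_def by (meson in_set_dropD)
  have "park (drop r (shuffled \<gamma> f h)) = park (comp_w ?u gamma2)"
    using drop_shuffled parking_length[OF f] parking_length[OF h] by simp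
  also have "\<dots> = comp_w (park ?u) gamma2" using park_comp_perm[OF perm] .
  also have "park ?u = times_w (park (drop n1 f)) (park (drop m1 h))"
    using park_append_shift[OF fragment positive] .
  finally show ?thesis .
qed

end

text \<open>(\<Sum>b\<in>supp x. x b * F b) is the value at x of the linear extension of F.\<close>

lemma sum_supp_extend:
  fixes x :: "'b \<Rightarrow> 'k::comm_ring_1"
  assumes "finite A" "supp x \<subseteq> A"
  shows "(\<Sum>b\<in>supp x. x b * F b) = (\<Sum>b\<in>A. x b * F b)"
  by (rule sum.mono_neutral_left) (use assms in \<open>auto simp: supp_def\<close>)

lemma sum_supp_linear_combination:
  fixes X :: "'i \<Rightarrow> 'b \<Rightarrow> 'k::comm_ring_1"
  assumes I: "finite I" and fs: "\<forall>i\<in>I. finite (supp (X i))"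
    and X0: "X0 = (\<lambda>b. \<Sum>i\<in>I. c i * X i b)"
  shows "(\<Sum>b\<in>supp X0. X0 b * F b) = (\<Sum>i\<in>I. c i * (\<Sum>b\<in>supp (X i). X i b * F b))"
proof -
  define A where "A = (\<Union>i\<in>I. supp (X i))"
  have fA: "finite A" unfolding A_def using I fs by blast
  have sA: "supp X0 \<subseteq> A"
  proof
    fix b assume "b \<in> supp X0"
    then have "(\<Sum>i\<in>I. c i * X i b) \<noteq> 0" unfolding supp_def X0 by simp
    then obtain i where i: "i \<in> I" "c i * X i b \<noteq> 0" by (meson sum.neutral)
    then have "X i b \<noteq> 0" by auto
    then show "b \<in> A" unfolding A_def supp_def using i(1) by blast
  qed
  have "(\<Sum>b\<in>supp X0. X0 b * F b) = (\<Sum>b\<in>A. X0 b * F b)" by (rule sum_supp_extend[OF fA sA])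
  also have "\<dots> = (\<Sum>b\<in>A. \<Sum>i\<in>I. c i * (X i b * F b))"
    unfolding X0 by (simp add: sum_distrib_right mult.assoc)
  also have "\<dots> = (\<Sum>i\<in>I. \<Sum>b\<in>A. c i * (X i b * F b))" by (rule sum.swap)
  also have "\<dots> = (\<Sum>i\<in>I. c i * (\<Sum>b\<in>A. X i b * F b))" by (simp add: sum_distrib_left)
  also have "\<dots> = (\<Sum>i\<in>I. c i * (\<Sum>b\<in>supp (X i). X i b * F b))"
  proof (rule sum.cong[OF refl])
    fix i assume "i \<in> I"
    then have "supp (X i) \<subseteq> A" unfolding A_def by blast
    then show "c i * (\<Sum>b\<in>A. X i b * F b) = c i * (\<Sum>b\<in>supp (X i). X i b * F b)"
      using sum_supp_extend[OF fA] by metis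
  qed
  finally show ?thesis .
qed

lemma sum_supp_add_scaled:
  fixes x :: "'b \<Rightarrow> 'k::comm_ring_1"
  assumes "finite (supp x)" "finite (supp x')"
  shows "(\<Sum>b\<in>supp (\<lambda>b. a * x b + x' b). (a * x b + x' b) * F b)
       = a * (\<Sum>b\<in>supp x. x b * F b) + (\<Sum>b\<in>supp x'. x' b * F b)"
proof -
  let ?A = "supp x \<union> supp x'"
  have fA: "finite ?A" using assms by simp
  have s: "supp (\<lambda>b. a * x b + x' b) \<subseteq> ?A" by (auto simp: supp_def)
  have "(\<Sum>b\<in>supp (\<lambda>b. a * x b + x' b). (a * x b + x' b) * F b) = (\<Sum>b\<in>?A. (a * x b + x' b) * F b)"
    using sum_supp_extend[OF fA s, of F] by simp
  also have "\<dots> = a * (\<Sum>b\<in>?A. x b * F b) + (\<Sum>b\<in>?A. x' b * F b)"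
    by (simp add: algebra_simps sum.distrib sum_distrib_left)
  also have "\<dots> = a * (\<Sum>b\<in>supp x. x b * F b) + (\<Sum>b\<in>supp x'. x' b * F b)"
    using sum_supp_extend[OF fA, of x F] sum_supp_extend[OF fA, of x' F] by auto
  finally show ?thesis .
qed

lemma supp_bvec [simp]: "supp (bvec a :: 'b \<Rightarrow> 'k::zero_neq_one) = {a}"
  by (auto simp: supp_def bvec_def)

lemma bvec_same [simp]: "bvec a a = 1"
  by (simp add: bvec_def)

lemma bvec_apply: "bvec a b = (if b = a then 1 else 0)"
  by (simp add: bvec_def)

lemma tens_bvec: "tens (bvec a) (bvec b) = (bvec (a, b) :: _ \<Rightarrow> 'k::comm_ring_1)"
  by (auto simp: tens_def bvec_def)

lemma finite_supp_expand:
  fixes x :: "'b \<Rightarrow> 'k::comm_ring_1"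
  assumes "finite (supp x)"
  shows "x a = (\<Sum>f\<in>supp x. x f * bvec f a)"
proof (cases "a \<in> supp x")
  case True
  have "(\<Sum>f\<in>supp x. x f * bvec f a) = (\<Sum>f\<in>supp x. if f = a then x f else 0)"
    by (rule sum.cong) (auto simp: bvec_def)
  then show ?thesis using assms True by (simp add: sum.delta')
next
  case False
  then show ?thesis using assms by (auto simp: bvec_def supp_def intro!: sum.neutral)
qed

lemma bvec_pair: "(bvec (p, q) (a, b) :: 'k::comm_ring_1) = bvec p a * bvec q b"
  by (simp add: bvec_def)

lemma finite_supp_sum_bvec:
  assumes "finite I"
  shows "finite (supp (\<lambda>p. \<Sum>k\<in>I. (bvec (s k) p :: 'k::comm_ring_1)))"
proof (rule finite_subset[of _ "s ` I"])
  show "supp (\<lambda>p. \<Sum>k\<in>I. (bvec (s k) p :: 'k)) \<subseteq> s ` I"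
  proof
    fix p assume "p \<in> supp (\<lambda>p. \<Sum>k\<in>I. (bvec (s k) p :: 'k))"
    then have "(\<Sum>k\<in>I. (bvec (s k) p :: 'k)) \<noteq> 0" by (simp add: supp_def)
    then obtain k where "k \<in> I" "(bvec (s k) p :: 'k) \<noteq> 0" by (meson sum.neutral)
    then show "p \<in> s ` I" by (auto simp: bvec_def split: if_splits)
  qed
qed (use assms in simp)

section \<open>The shuffle algebra\<close>

lemma hom_PF_iff: "x \<in> hom PF_basis length n \<longleftrightarrow> finite (supp x) \<and> supp x \<subseteq> PF_basis \<and> (\<forall>b\<in>supp x. length b = n)"
  by (simp add: hom_def fvec_def)

lemma hom_PF_parking: "x \<in> hom PF_basis length n \<Longrightarrow> f \<in> supp x \<Longrightarrow> parking n f \<and> 1 \<le> n"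
proof -
  assume x: "x \<in> hom PF_basis length n" and f: "f \<in> supp x"
  then have "f \<in> PF_basis" "length f = n" unfolding hom_PF_iff by auto
  then show ?thesis unfolding PF_basis_iff by simp
qed

lemma hom_PF_0: "hom PF_basis length 0 = {(\<lambda>_. 0) :: nat list \<Rightarrow> 'k::field}"
proof -
  have "x \<in> hom PF_basis length 0 \<longleftrightarrow> supp x = {}" for x :: "nat list \<Rightarrow> 'k"
    by (auto simp: hom_PF_iff PF_basis_iff)
  then show ?thesis by (auto simp: supp_def)
qed

lemma pq_prod_alt: "pq_prod \<gamma> x y = (\<lambda>h. \<Sum>f\<in>supp x. x f * (\<Sum>g\<in>supp y. y g * bvec (shuffled \<gamma> f g) h))"
  unfolding pq_prod_def by (simp add: sum_distrib_left mult.assoc)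

lemma pq_prod_alt_right:
  "pq_prod \<gamma> x y = (\<lambda>h. \<Sum>g\<in>supp y. y g * (\<Sum>f\<in>supp x. x f * bvec (shuffled \<gamma> f g) h))"
  unfolding pq_prod_def by (subst sum.swap) (simp add: sum_distrib_left mult_ac)

lemma pq_prod_Times:
  assumes "finite (supp x)" "finite (supp y)"
  shows "pq_prod \<gamma> x y = (\<lambda>h. \<Sum>p\<in>supp x \<times> supp y. (x (fst p) * y (snd p)) * bvec (shuffled \<gamma> (fst p) (snd p)) h)"
  unfolding pq_prod_def using assms by (simp add: sum.cartesian_product split_def)

lemma pq_prod_bvec: "pq_prod \<gamma> (bvec a) (bvec b) = (bvec (shuffled \<gamma> a b) :: _ \<Rightarrow> 'k::field)"
  unfolding pq_prod_def supp_bvec by (simp add: bvec_def)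

lemma pq_prod_supp: "supp (pq_prod \<gamma> x y) \<subseteq> (\<lambda>(f, g). shuffled \<gamma> f g) ` (supp x \<times> supp y)"
proof
  fix h assume h: "h \<in> supp (pq_prod \<gamma> x y)"
  show "h \<in> (\<lambda>(f, g). shuffled \<gamma> f g) ` (supp x \<times> supp y)"
  proof (rule ccontr)
    assume n: "h \<notin> (\<lambda>(f, g). shuffled \<gamma> f g) ` (supp x \<times> supp y)"
    have "pq_prod \<gamma> x y h = 0" unfolding pq_prod_def
      by (rule sum.neutral, rule ballI, rule sum.neutral) (use n in \<open>auto simp: bvec_def\<close>)
    then show False using h by (simp add: supp_def)
  qed
qed

lemma pq_prod_hom:
  assumes g: "\<gamma> \<in> Sh n m" and x: "x \<in> hom PF_basis length n" and y: "y \<in> hom PF_basis length m"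
  shows "(pq_prod \<gamma> x y :: _ \<Rightarrow> 'k::field) \<in> hom PF_basis length (n + m)"
proof -
  have fx: "finite (supp x)" "finite (supp y)" using x y by (simp_all add: hom_PF_iff)
  have s: "supp (pq_prod \<gamma> x y) \<subseteq> (\<lambda>(f, g). shuffled \<gamma> f g) ` (supp x \<times> supp y)"
    by (rule pq_prod_supp)
  have w: "shuffled \<gamma> f h \<in> PF_basis \<and> length (shuffled \<gamma> f h) = n + m" if "f \<in> supp x" "h \<in> supp y" for f h
  proof -
    have "parking n f" "1 \<le> n" "parking m h"
      using hom_PF_parking[OF x that(1)] hom_PF_parking[OF y that(2)] by auto
    then have "parking (n + m) (shuffled \<gamma> f h)"
      using parking_times_w parking_comp_perm Sh_perm[OF g] by blast
    then show ?thesis using \<open>1 \<le> n\<close> Sh_length[OF g]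
      unfolding PF_basis_iff by (simp add: parking_length)
  qed
  show ?thesis unfolding hom_PF_iff
    using s fx w finite_subset[OF s] by fastforce
qed

lemma pq_prod_linear_left:
  assumes "x \<in> hom PF_basis length n" "x' \<in> hom PF_basis length n"
  shows "pq_prod \<gamma> (\<lambda>b. a * x b + x' b) y = (\<lambda>b. a * pq_prod \<gamma> x y b + pq_prod \<gamma> x' y b :: 'k::field)"
proof -
  have f: "finite (supp x)" "finite (supp x')" using assms by (simp_all add: hom_PF_iff)
  show ?thesis unfolding pq_prod_alt
    using sum_supp_add_scaled[OF f, of a] by simp
qed

lemma pq_prod_linear_right:
  assumes "y \<in> hom PF_basis length m" "y' \<in> hom PF_basis length m"
  shows "pq_prod \<gamma> x (\<lambda>b. a * y b + y' b) = (\<lambda>b. a * pq_prod \<gamma> x y b + pq_prod \<gamma> x y' b :: 'k::field)"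
proof -
  have f: "finite (supp y)" "finite (supp y')" using assms by (simp_all add: hom_PF_iff)
  show ?thesis unfolding pq_prod_alt_right
    using sum_supp_add_scaled[OF f, of a] by simp
qed

lemma comp_w_assoc: "\<forall>i\<in>set c. 1 \<le> i \<and> i \<le> length b \<Longrightarrow> comp_w (comp_w a b) c = comp_w a (comp_w b c)"
  by (auto simp: comp_w_def)

lemma times_w_assoc: "times_w (times_w f g) k = times_w f (times_w g k)"
  by (simp add: times_w_def)

lemma times_w_comp_w_right:
  assumes "\<forall>i\<in>set \<delta>. 1 \<le> i \<and> i \<le> length v"
  shows "times_w f (comp_w v \<delta>) = comp_w (times_w f v) (times_w (idp (length f)) \<delta>)"
proof -
  have a: "map (\<lambda>i. times_w f v ! (i - 1)) (idp (length f)) = f"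
    by (rule nth_equalityI) (auto simp: idp_def times_w_def nth_append)
  have b: "map (\<lambda>i. times_w f v ! (i - 1)) (map (\<lambda>i. i + length f) \<delta>) = map (\<lambda>i. i + length f) (map (\<lambda>j. v ! (j - 1)) \<delta>)"
    using assms by (auto simp: times_w_def nth_append)
  show ?thesis unfolding comp_w_def using a b by (simp add: times_w_def)
qed

lemma times_w_comp_w_left:
  assumes "\<forall>i\<in>set \<sigma>. 1 \<le> i \<and> i \<le> length u" "length \<sigma> = length u"
  shows "times_w (comp_w u \<sigma>) k = comp_w (times_w u k) (times_w \<sigma> (idp (length k)))"
proof -
  have a: "map (\<lambda>i. times_w u k ! (i - 1)) \<sigma> = comp_w u \<sigma>"
    using assms by (auto simp: times_w_def nth_append comp_w_def)
  have b: "map (\<lambda>i. times_w u k ! (i - 1)) (map (\<lambda>i. i + length \<sigma>) (idp (length k))) = map (\<lambda>i. i + length u) k"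
    using assms by (intro nth_equalityI) (auto simp: times_w_def nth_append idp_def)
  show ?thesis unfolding comp_w_def[of "times_w u k"] using a b assms by (simp add: times_w_def)
qed

lemma shuffled_assoc:
  assumes l: "length f = n" "length g = m" "length k = r"
    and \<gamma>: "\<gamma> \<in> Sh n (m + r)" and \<delta>: "\<delta> \<in> Sh m r" and \<sigma>: "\<sigma> \<in> Sh n m" and \<lambda>: "lam \<in> Sh (n + m) r"
    and e: "comp_w (times_w (idp n) \<delta>) \<gamma> = comp_w (times_w \<sigma> (idp r)) lam"
  shows "shuffled \<gamma> f (shuffled \<delta> g k) = shuffled lam (shuffled \<sigma> f g) k"
proof -
  have p: "is_perm (n + (m + r)) \<gamma>" "is_perm (m + r) \<delta>" "is_perm (n + m) \<sigma>" "is_perm (n + m + r) lam"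
    using \<gamma> \<delta> \<sigma> \<lambda> Sh_perm by blast+
  have L: "shuffled \<gamma> f (shuffled \<delta> g k) = comp_w (times_w (times_w f g) k) (comp_w (times_w (idp n) \<delta>) \<gamma>)"
  proof -
    have "times_w f (shuffled \<delta> g k) = comp_w (times_w f (times_w g k)) (times_w (idp n) \<delta>)"
      using times_w_comp_w_right[of \<delta> "times_w g k" f] is_perm_range[OF p(2)] l by simp
    then have "shuffled \<gamma> f (shuffled \<delta> g k) = comp_w (comp_w (times_w f (times_w g k)) (times_w (idp n) \<delta>)) \<gamma>" by simp
    also have "\<dots> = comp_w (times_w f (times_w g k)) (comp_w (times_w (idp n) \<delta>) \<gamma>)"
      using is_perm_range[OF p(1)] is_perm_length[OF p(2)]
        by (intro comp_w_assoc) (simp add: add.assoc)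
    finally show ?thesis by (simp add: times_w_assoc)
  qed
  have R: "shuffled lam (shuffled \<sigma> f g) k = comp_w (times_w (times_w f g) k) (comp_w (times_w \<sigma> (idp r)) lam)"
  proof -
    have "times_w (shuffled \<sigma> f g) k = comp_w (times_w (times_w f g) k) (times_w \<sigma> (idp r))"
      using times_w_comp_w_left[of \<sigma> "times_w f g" k] is_perm_range[OF p(3)] is_perm_length[OF p(3)] l by simp
    then have "shuffled lam (shuffled \<sigma> f g) k = comp_w (comp_w (times_w (times_w f g) k) (times_w \<sigma> (idp r))) lam" by simp
    also have "\<dots> = comp_w (times_w (times_w f g) k) (comp_w (times_w \<sigma> (idp r)) lam)"
      using is_perm_range[OF p(4)] is_perm_length[OF p(3)] by (intro comp_w_assoc) simp
    finally show ?thesis .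
  qed
  show ?thesis using L R e by simp
qed

lemma pq_assoc:
  fixes x y z :: "nat list \<Rightarrow> 'k::field"
  assumes x: "x \<in> hom PF_basis length n" and y: "y \<in> hom PF_basis length m" and z: "z \<in> hom PF_basis length r"
    and \<gamma>: "\<gamma> \<in> Sh n (m + r)" and \<delta>: "\<delta> \<in> Sh m r" and \<sigma>: "\<sigma> \<in> Sh n m" and \<lambda>: "lam \<in> Sh (n + m) r"
    and e: "comp_w (times_w (idp n) \<delta>) \<gamma> = comp_w (times_w \<sigma> (idp r)) lam"
  shows "pq_prod \<gamma> x (pq_prod \<delta> y z) = pq_prod lam (pq_prod \<sigma> x y) z"
proof (rule ext)
  fix h
  have fx: "finite (supp x)" "finite (supp y)" "finite (supp z)"
    using x y z by (simp_all add: hom_PF_iff)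
  have "pq_prod \<gamma> x (pq_prod \<delta> y z) h
      = (\<Sum>f\<in>supp x. x f * (\<Sum>p\<in>supp y \<times> supp z. (y (fst p) * z (snd p)) * bvec (shuffled \<gamma> f (shuffled \<delta> (fst p) (snd p))) h))"
    unfolding pq_prod_alt[of \<gamma> x] 
    by (subst sum_supp_linear_combination[OF _ _ pq_prod_Times[OF fx(2,3)]]) (use fx in auto)
  also have "\<dots> = (\<Sum>f\<in>supp x. \<Sum>g\<in>supp y. \<Sum>k\<in>supp z. x f * y g * z k * bvec (shuffled \<gamma> f (shuffled \<delta> g k)) h)"
    by (simp add: sum.cartesian_product split_def sum_distrib_left mult.assoc)
  also have "\<dots> = (\<Sum>f\<in>supp x. \<Sum>g\<in>supp y. \<Sum>k\<in>supp z. x f * y g * z k * bvec (shuffled lam (shuffled \<sigma> f g) k) h)"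
    using shuffled_assoc[OF _ _ _ \<gamma> \<delta> \<sigma> \<lambda> e] x y z by (intro sum.cong refl) (auto simp: hom_PF_iff)
  also have "\<dots> = (\<Sum>p\<in>supp x \<times> supp y. \<Sum>k\<in>supp z. x (fst p) * y (snd p) * z k * bvec (shuffled lam (shuffled \<sigma> (fst p) (snd p)) k) h)"
    by (simp only: sum.cartesian_product') simp
  also have "\<dots> = (\<Sum>p\<in>supp x \<times> supp y. (x (fst p) * y (snd p)) * (\<Sum>k\<in>supp z. z k * bvec (shuffled lam (shuffled \<sigma> (fst p) (snd p)) k) h))"
    by (simp add: sum_distrib_left mult.assoc)
  also have "\<dots> = pq_prod lam (pq_prod \<sigma> x y) z h"
    unfolding pq_prod_alt[of lam "pq_prod \<sigma> x y"]
    by (subst sum_supp_linear_combination[OF _ _ pq_prod_Times[OF fx(1,2)]]) (use fx in auto)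
  finally show "pq_prod \<gamma> x (pq_prod \<delta> y z) h = pq_prod lam (pq_prod \<sigma> x y) z h" .
qed

lemma pq_shuffle_algebra:
  "shuffle_algebra PF_basis length (pq_prod :: nat list \<Rightarrow> (nat list \<Rightarrow> 'k::field) \<Rightarrow> _ \<Rightarrow> _)"
  unfolding shuffle_algebra_def
  by (intro conjI allI impI ballI; (elim conjE)?)
     (simp_all add: pq_prod_hom pq_prod_linear_left pq_prod_linear_right pq_assoc)

section \<open>The coproduct\<close>

abbreviation park_split :: "nat list \<Rightarrow> nat \<Rightarrow> nat list \<times> nat list" where
  "park_split f r \<equiv> (park (take r f), park (drop r f))"

lemma pq_cop_alt: "pq_cop x = (\<lambda>t. \<Sum>f\<in>supp x. x f * (\<Sum>r\<in>{1..<length f}. bvec (park_split f r) t))"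
  unfolding pq_cop_def tens_bvec by (simp add: sum_distrib_left)

lemma pq_cop_bvec: "pq_cop (bvec f) = (\<lambda>t. \<Sum>r\<in>{1..<length f}. (bvec (park_split f r) t :: 'k::field))"
  unfolding pq_cop_alt supp_bvec by (simp add: bvec_def)

lemma pq_cop_Sigma:
  assumes "finite (supp x)"
  shows "pq_cop x = (\<lambda>t. \<Sum>p\<in>Sigma (supp x) (\<lambda>f. {1..<length f}). x (fst p) * bvec (park_split (fst p) (snd p)) t)"
  unfolding pq_cop_alt using assms by (simp add: sum.Sigma sum_distrib_left split_def)

lemma pq_cop_linear:
  fixes x x' :: "nat list \<Rightarrow> 'k::field"
  assumes "x \<in> fvec PF_basis" "x' \<in> fvec PF_basis"
  shows "pq_cop (\<lambda>b. a * x b + x' b) = (\<lambda>t. a * pq_cop x t + pq_cop x' t)"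
proof -
  have f: "finite (supp x)" "finite (supp x')" using assms by (simp_all add: fvec_def)
  show ?thesis unfolding pq_cop_alt using sum_supp_add_scaled[OF f, of a] by simp
qed

lemma pq_cop_supp:
  fixes x :: "nat list \<Rightarrow> 'k::field"
  assumes "finite (supp x)"
  shows "supp (pq_cop x) \<subseteq> (\<lambda>p. park_split (fst p) (snd p)) ` Sigma (supp x) (\<lambda>f. {1..<length f})"
proof
  fix t assume t: "t \<in> supp (pq_cop x)"
  show "t \<in> (\<lambda>p. park_split (fst p) (snd p)) ` Sigma (supp x) (\<lambda>f. {1..<length f})"
  proof (rule ccontr)
    assume n: "t \<notin> (\<lambda>p. park_split (fst p) (snd p)) ` Sigma (supp x) (\<lambda>f. {1..<length f})"
    have "pq_cop x t = 0" unfolding pq_cop_Sigma[OF assms]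
      by (rule sum.neutral) (use n in \<open>force simp: bvec_def\<close>)
    then show False using t by (simp add: supp_def)
  qed
qed

lemma pq_cop_graded:
  fixes x :: "nat list \<Rightarrow> 'k::field"
  assumes x: "x \<in> hom PF_basis length n"
  shows "pq_cop x \<in> fvec (PF_basis \<times> PF_basis) \<and>
       (\<forall>(p, q)\<in>supp (pq_cop x). 1 \<le> length p \<and> length p \<le> n - 1 \<and> length q = n - length p)"
proof -
  have fx: "finite (supp x)" using x by (simp add: hom_PF_iff)
  note s = pq_cop_supp[OF fx]
  have fin: "finite (supp (pq_cop x))"
    by (rule finite_subset[OF s]) (use fx in auto)
  have el: "park (take r f) \<in> PF_basis \<and> park (drop r f) \<in> PF_basis \<and> 1 \<le> length (park (take r f)) \<and>
      length (park (take r f)) \<le> n - 1 \<and> length (park (drop r f)) = n - length (park (take r f))"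
    if "f \<in> supp x" "r \<in> {1..<length f}" for f r
  proof -
    have "length f = n" using x that(1) by (auto simp: hom_PF_iff)
    then show ?thesis using that(2) park_in_PF_basis[of "take r f"] park_in_PF_basis[of "drop r f"] by auto
  qed
  show ?thesis unfolding fvec_def using fin s el by fastforce
qed

subsection \<open>Coassociativity\<close>

lemma park_split_park_take:
  "s \<le> r \<Longrightarrow> park_split (park (take r f)) s = (park (take s f), park (drop s (take r f)))"
  using park_take_park[of s "take r f"] park_drop_park[of s "take r f"] by (simp add: min_def)

lemma park_split_park_drop:
  "park_split (park (drop s f)) t = (park (drop s (take (t + s) f)), park (drop (t + s) f))"
  using park_take_park[of t "drop s f"] park_drop_park[of t "drop s f"]
  by (simp add: take_drop add.commute)

lemma sum_pairs_swap:
  "(\<Sum>r\<in>{1..<n}. \<Sum>s\<in>{1..<r}. T s r) = (\<Sum>s\<in>{1..<n}. \<Sum>r\<in>{Suc s..<n}. (T s r :: 'a::comm_monoid_add))"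
proof -
  have "(\<Sum>r\<in>{1..<n}. \<Sum>s\<in>{1..<r}. T s r) = (\<Sum>r\<in>{1..<n}. \<Sum>s\<in>{s. s \<in> {1..<n} \<and> s < r}. T s r)"
    by (rule sum.cong[OF refl], rule sum.cong) auto
  also have "\<dots> = (\<Sum>s\<in>{1..<n}. \<Sum>r\<in>{r. r \<in> {1..<n} \<and> s < r}. T s r)"
    by (rule sum.swap_restrict) auto
  also have "\<dots> = (\<Sum>s\<in>{1..<n}. \<Sum>r\<in>{Suc s..<n}. T s r)"
    by (rule sum.cong[OF refl], rule sum.cong) auto
  finally show ?thesis .
qed

text \<open>Both sides are the sum over 0 < s < r < n of
  Park(f|[1,s]) \<otimes> Park(f|(s,r]) \<otimes> Park(f|(r,n]), evaluated at (a, b, c).\<close>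
lemma pq_cop_park_split_coassoc:
  fixes a b c :: "nat list"
  assumes "length f = n"
  shows "(\<Sum>r\<in>{1..<n}. pq_cop (bvec (park (take r f))) (a, b) * (bvec (park (drop r f)) c :: 'k::field))
       = (\<Sum>s\<in>{1..<n}. bvec (park (take s f)) a * pq_cop (bvec (park (drop s f))) (b, c))"
proof -
  define T where
    "T s r = (bvec (park (take s f)) a * bvec (park (drop s (take r f))) b * bvec (park (drop r f)) c :: 'k)"
    for s r
  have "pq_cop (bvec (park (take r f))) (a, b) * bvec (park (drop r f)) c = (\<Sum>s\<in>{1..<r}. T s r)"
    if "r \<in> {1..<n}" for r
    using that assms
    by (auto simp: pq_cop_bvec sum_distrib_right T_def bvec_pair park_split_park_take intro!: sum.cong)
  moreover have "bvec (park (take s f)) a * pq_cop (bvec (park (drop s f))) (b, c)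
      = (\<Sum>r\<in>{Suc s..<n}. T s r)" if "s \<in> {1..<n}" for s
  proof -
    have "bvec (park (take s f)) a * pq_cop (bvec (park (drop s f))) (b, c) = (\<Sum>t\<in>{1..<n - s}. T s (t + s))"
      using assms by (simp add: pq_cop_bvec sum_distrib_left T_def bvec_pair park_split_park_drop mult.assoc)
    also have "\<dots> = (\<Sum>r\<in>{Suc s..<n}. T s r)"
      using sum.shift_bounds_nat_ivl[of "T s" 1 s "n - s"] that by simp
    finally show ?thesis .
  qed
  ultimately show ?thesis using sum_pairs_swap[where n = n and T = T] by simp
qed

lemma lmap_pq_cop:
  fixes x :: "nat list \<Rightarrow> 'k::field"
  assumes "finite (supp x)"
  shows "lmap F (pq_cop x) (a, b, c)
    = (\<Sum>f\<in>supp x. x f * (\<Sum>r\<in>{1..<length f}. F (bvec (park (take r f))) (a, b) * bvec (park (drop r f)) c))"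
proof -
  let ?S = "Sigma (supp x) (\<lambda>f. {1..<length f})"
  let ?K = "\<lambda>pq :: nat list \<times> nat list. F (bvec (fst pq)) (a, b) * (bvec (snd pq) c :: 'k)"
  have "lmap F (pq_cop x) (a, b, c) = (\<Sum>pq\<in>supp (pq_cop x). pq_cop x pq * ?K pq)"
    unfolding lmap_def by (simp add: split_def mult.assoc)
  also have "\<dots> = (\<Sum>i\<in>?S. x (fst i) * ?K (park_split (fst i) (snd i)))"
    using sum_supp_linear_combination[OF _ _ pq_cop_Sigma[OF assms], of ?K] assms by simp
  also have "\<dots> = (\<Sum>f\<in>supp x. \<Sum>r\<in>{1..<length f}. x f * ?K (park_split f r))"
    using assms by (simp add: sum.Sigma split_def)
  finally show ?thesis by (simp add: sum_distrib_left)
qed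

lemma rmap_pq_cop:
  fixes x :: "nat list \<Rightarrow> 'k::field"
  assumes "finite (supp x)"
  shows "rmap F (pq_cop x) (a, b, c)
    = (\<Sum>f\<in>supp x. x f * (\<Sum>r\<in>{1..<length f}. bvec (park (take r f)) a * F (bvec (park (drop r f))) (b, c)))"
proof -
  let ?S = "Sigma (supp x) (\<lambda>f. {1..<length f})"
  let ?K = "\<lambda>pq :: nat list \<times> nat list. (bvec (fst pq) a :: 'k) * F (bvec (snd pq)) (b, c)"
  have "rmap F (pq_cop x) (a, b, c) = (\<Sum>pq\<in>supp (pq_cop x). pq_cop x pq * ?K pq)"
    unfolding rmap_def by (simp add: split_def mult.assoc)
  also have "\<dots> = (\<Sum>i\<in>?S. x (fst i) * ?K (park_split (fst i) (snd i)))"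
    using sum_supp_linear_combination[OF _ _ pq_cop_Sigma[OF assms], of ?K] assms by simp
  also have "\<dots> = (\<Sum>f\<in>supp x. \<Sum>r\<in>{1..<length f}. x f * ?K (park_split f r))"
    using assms by (simp add: sum.Sigma split_def)
  finally show ?thesis by (simp add: sum_distrib_left)
qed

lemma pq_cop_coassoc:
  fixes x :: "nat list \<Rightarrow> 'k::field"
  assumes "x \<in> fvec PF_basis"
  shows "lmap pq_cop (pq_cop x) = rmap pq_cop (pq_cop x)"
proof (rule ext, clarify)
  fix a b c :: "nat list"
  have fx: "finite (supp x)" using assms by (simp add: fvec_def)
  show "lmap pq_cop (pq_cop x) (a, b, c) = rmap pq_cop (pq_cop x) (a, b, c)"
    unfolding lmap_pq_cop[OF fx] rmap_pq_cop[OF fx]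
    by (intro sum.cong refl arg_cong2[where f="(*)"] pq_cop_park_split_coassoc)
qed

section \<open>Compatibility of the coproduct with the products\<close>

definition opt_nonempty :: "nat list \<Rightarrow> nat list option" where
  "opt_nonempty l = (if l = [] then None else Some l)"

text \<open>The basis element of (K1 + A) \<otimes> (K1 + A) obtained by cutting f after k letters and
  parking both pieces, None standing for the unit; k = 0 and k = length f give
  1 \<otimes> f and f \<otimes> 1 for a parking function f.\<close>
definition park_split_opt :: "nat list \<Rightarrow> nat \<Rightarrow> nat list option \<times> nat list option" where
  "park_split_opt f k = (opt_nonempty (park (take k f)), opt_nonempty (park (drop k f)))"

lemma odeg_park_split_opt: "k \<le> length f \<Longrightarrow> odeg length (fst (park_split_opt f k)) = k"
  by (cases k) (auto simp: park_split_opt_def opt_nonempty_def park_Nil_iff)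

lemma sum_park_split_opt:
  assumes "parking n f" "1 \<le> n"
  shows "(\<Sum>k\<in>{0..n}. bvec (park_split_opt f k) p) = bvec (None, Some f) p + bvec (Some f, None) p
    + (\<Sum>k\<in>{1..<n}. bvec (Some (park (take k f)), Some (park (drop k f))) p)"
proof -
  have len: "length f = n" and pf: "park f = f" using assms park_parking parking_length by blast+
  then have ne: "f \<noteq> []" using assms(2) by auto
  have ends: "park_split_opt f 0 = (None, Some f)" "park_split_opt f n = (Some f, None)"
    using pf ne len by (simp_all add: park_split_opt_def opt_nonempty_def park_Nil_iff)
  have "{0..n} = insert 0 (insert n {1..<n})" using assms(2) by auto
  then have "(\<Sum>k\<in>{0..n}. bvec (park_split_opt f k) p) = bvec (None, Some f) p
      + bvec (Some f, None) p + (\<Sum>k\<in>{1..<n}. bvec (park_split_opt f k) p)"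
    using assms(2) ends by (simp add: add.assoc)
  also have "(\<Sum>k\<in>{1..<n}. bvec (park_split_opt f k) p)
      = (\<Sum>k\<in>{1..<n}. bvec (Some (park (take k f)), Some (park (drop k f))) p)"
    using len by (intro sum.cong) (auto simp: park_split_opt_def opt_nonempty_def park_Nil_iff)
  finally show ?thesis .
qed

lemma dplus_bvec:
  assumes "parking n f" "1 \<le> n"
  shows "dplus pq_cop (bvec f :: _ \<Rightarrow> 'k::field) = (\<lambda>p. \<Sum>k\<in>{0..n}. bvec (park_split_opt f k) p)"
proof (rule ext)
  fix p :: "nat list option \<times> nat list option"
  have len: "length f = n" using assms parking_length by blast
  obtain u v where "p = (u, v)" by (cases p)
  then show "dplus pq_cop (bvec f :: _ \<Rightarrow> 'k) p = (\<Sum>k\<in>{0..n}. bvec (park_split_opt f k) p)"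
    unfolding sum_park_split_opt[OF assms] using len
    by (cases u; cases v) (simp_all add: dplus_def pq_cop_bvec bvec_apply)
qed

lemma dplus_linear:
  fixes x :: "nat list \<Rightarrow> 'k::field"
  assumes "finite (supp x)"
  shows "dplus pq_cop x = (\<lambda>p. \<Sum>f\<in>supp x. x f * dplus pq_cop (bvec f) p)"
proof (rule ext)
  fix p :: "nat list option \<times> nat list option"
  obtain u v where p: "p = (u, v)" by (cases p)
  show "dplus pq_cop x p = (\<Sum>f\<in>supp x. x f * dplus pq_cop (bvec f) p)"
  proof (cases u; cases v)
    fix a b assume "u = Some a" "v = Some b"
    then show ?thesis using p by (simp add: dplus_def pq_cop_alt pq_cop_bvec)
  next
    fix a assume "u = Some a" "v = None"
    then show ?thesis using p finite_supp_expand[OF assms, of a] by (simp add: dplus_def)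
  next
    fix a assume "u = None" "v = Some a"
    then show ?thesis using p finite_supp_expand[OF assms, of a] by (simp add: dplus_def)
  qed (simp add: p dplus_def)
qed

lemma sum_dplus_bvec_degree:
  fixes G :: "nat list option \<times> nat list option \<Rightarrow> 'k::field"
  assumes f: "parking n f" "1 \<le> n" and k: "k \<le> n"
  shows "(\<Sum>p\<in>supp (dplus pq_cop (bvec f :: _ \<Rightarrow> 'k)).
            dplus pq_cop (bvec f) p * (if odeg length (fst p) = k then G p else 0))
       = G (park_split_opt f k)"
proof -
  have dplus_f: "dplus pq_cop (bvec f :: _ \<Rightarrow> 'k) = (\<lambda>p. \<Sum>j\<in>{0..n}. 1 * bvec (park_split_opt f j) p)"
    using dplus_bvec[OF f] by simp
  have "(\<Sum>p\<in>supp (dplus pq_cop (bvec f :: _ \<Rightarrow> 'k)).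
            dplus pq_cop (bvec f) p * (if odeg length (fst p) = k then G p else 0))
      = (\<Sum>j\<in>{0..n}. 1 * (\<Sum>p\<in>supp (bvec (park_split_opt f j) :: _ \<Rightarrow> 'k).
            bvec (park_split_opt f j) p * (if odeg length (fst p) = k then G p else 0)))"
    by (rule sum_supp_linear_combination[OF _ _ dplus_f]) simp_all
  also have "\<dots> = (\<Sum>j\<in>{0..n}. if j = k then G (park_split_opt f k) else 0)"
    using odeg_park_split_opt parking_length[OF f(1)] by (intro sum.cong) auto
  finally show ?thesis using k by (simp add: sum.delta)
qed

lemma sum_dplus_degree:
  fixes x :: "nat list \<Rightarrow> 'k::field" and G :: "nat list option \<times> nat list option \<Rightarrow> 'k"
  assumes x: "x \<in> hom PF_basis length n" and k: "k \<le> n"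
  shows "(\<Sum>p\<in>supp (dplus pq_cop x). dplus pq_cop x p * (if odeg length (fst p) = k then G p else 0))
       = (\<Sum>f\<in>supp x. x f * G (park_split_opt f k))"
proof -
  have fx: "finite (supp x)" using x by (simp add: hom_PF_iff)
  have "finite (supp (dplus pq_cop (bvec f :: _ \<Rightarrow> 'k)))" if "f \<in> supp x" for f
  proof -
    have "parking n f" "1 \<le> n" using hom_PF_parking[OF x that] by auto
    then show ?thesis by (simp add: dplus_bvec finite_supp_sum_bvec)
  qed
  then have "(\<Sum>p\<in>supp (dplus pq_cop x). dplus pq_cop x p * (if odeg length (fst p) = k then G p else 0))
      = (\<Sum>f\<in>supp x. x f * (\<Sum>p\<in>supp (dplus pq_cop (bvec f :: _ \<Rightarrow> 'k)).
            dplus pq_cop (bvec f) p * (if odeg length (fst p) = k then G p else 0)))"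
    by (intro sum_supp_linear_combination[OF fx _ dplus_linear[OF fx]]) blast
  also have "\<dots> = (\<Sum>f\<in>supp x. x f * G (park_split_opt f k))"
    using sum_dplus_bvec_degree[where G = G] hom_PF_parking[OF x] k by (intro sum.cong) auto
  finally show ?thesis .
qed

lemma oprod_opt_nonempty:
  assumes t: "\<tau> \<in> Sh (length a) (length b)" and ne: "a \<noteq> [] \<or> b \<noteq> []"
  shows "oprod (pq_prod :: _ \<Rightarrow> _ \<Rightarrow> _ \<Rightarrow> _ \<Rightarrow> 'k::field) \<tau> (opt_nonempty a) (opt_nonempty b)
    = bvec (shuffled \<tau> a b)"
proof -
  consider "a = []" | "b = []" | "a \<noteq> []" "b \<noteq> []" by blast
  then show ?thesis
  proof cases
    case 1
    then have "shuffled \<tau> a b = b"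
      using Sh_0_left[of \<tau>] t map_upt_nth[of b] by (simp add: times_w_def comp_w_def)
    then show ?thesis using 1 ne by (simp add: opt_nonempty_def)
  next
    case 2
    then have "shuffled \<tau> a b = a"
      using Sh_0_right[of \<tau>] t map_upt_nth[of a] by (simp add: times_w_def comp_w_def)
    then show ?thesis using 2 ne by (simp add: opt_nonempty_def)
  next
    case 3
    then show ?thesis by (simp add: opt_nonempty_def pq_prod_bvec)
  qed
qed

lemma sum_sum_if_conj:
  "(\<Sum>a\<in>A. \<Sum>b\<in>B. if P a \<and> Q b then X a * Y b * T a b else 0)
   = (\<Sum>a\<in>A. X a * (if P a then (\<Sum>b\<in>B. Y b * (if Q b then T a b else 0)) else (0::'k::comm_ring_1)))"
proof (rule sum.cong[OF refl])
  fix a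
  show "(\<Sum>b\<in>B. if P a \<and> Q b then X a * Y b * T a b else 0)
      = X a * (if P a then (\<Sum>b\<in>B. Y b * (if Q b then T a b else 0)) else 0)"
    by (cases "P a") (auto simp: sum_distrib_left mult.assoc intro!: sum.cong)
qed

context shuffle_cut
begin

lemma tens_oprod_park_split_opt:
  assumes f: "parking n f" and h: "parking m h" and r0: "1 \<le> r" and r1: "r < n + m"
  shows "tens (oprod (pq_prod :: _ \<Rightarrow> _ \<Rightarrow> _ \<Rightarrow> _ \<Rightarrow> 'k::field) gamma1
                 (fst (park_split_opt f n1)) (fst (park_split_opt h m1)))
              (oprod pq_prod gamma2 (snd (park_split_opt f n1)) (snd (park_split_opt h m1)))
       = bvec (park_split (shuffled \<gamma> f h) r)"
proof -
  have lf: "length f = n" "length h = m" using f h by (simp_all add: parking_def)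
  have l1: "length (park (take n1 f)) = n1" "length (park (take m1 h)) = m1"
    using lf n1_le m1_le by simp_all
  have l2: "length (park (drop n1 f)) = n - n1" "length (park (drop m1 h)) = m - m1"
    using lf by simp_all
  have "park (take n1 f) \<noteq> [] \<or> park (take m1 h) \<noteq> []"
    using l1 r_eq r0 by (metis add_is_0 length_0_conv not_one_le_zero)
  then have o1: "oprod (pq_prod :: _ \<Rightarrow> _ \<Rightarrow> _ \<Rightarrow> _ \<Rightarrow> 'k) gamma1 (opt_nonempty (park (take n1 f)))
      (opt_nonempty (park (take m1 h))) = bvec (shuffled gamma1 (park (take n1 f)) (park (take m1 h)))"
    using gamma1_Sh l1 by (intro oprod_opt_nonempty) auto
  have "park (drop n1 f) \<noteq> [] \<or> park (drop m1 h) \<noteq> []"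
    using l2 r_eq r1 n1_le m1_le
      by (metis add_is_0 diff_is_0_eq le_antisym length_0_conv less_not_refl add_mono)
  then have o2: "oprod (pq_prod :: _ \<Rightarrow> _ \<Rightarrow> _ \<Rightarrow> _ \<Rightarrow> 'k) gamma2 (opt_nonempty (park (drop n1 f)))
      (opt_nonempty (park (drop m1 h))) = bvec (shuffled gamma2 (park (drop n1 f)) (park (drop m1 h)))"
    using gamma2_Sh l2 by (intro oprod_opt_nonempty) auto
  show ?thesis
    unfolding park_split_opt_def fst_conv snd_conv o1 o2 tens_bvec
      park_take_shuffled[OF f h] park_drop_shuffled[OF f h] ..
qed

lemma compat_summand:
  fixes x y :: "nat list \<Rightarrow> 'k::field"
  assumes x: "x \<in> hom PF_basis length n" and y: "y \<in> hom PF_basis length m"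
    and r: "1 \<le> r" "r < n + m"
  shows "(\<Sum>pa\<in>supp (dplus pq_cop x). \<Sum>pb\<in>supp (dplus pq_cop y).
            if odeg length (fst pa) = n1 \<and> odeg length (fst pb) = m1
            then dplus pq_cop x pa * dplus pq_cop y pb *
                 tens (oprod pq_prod gamma1 (fst pa) (fst pb)) (oprod pq_prod gamma2 (snd pa) (snd pb)) t
            else 0)
       = (\<Sum>f\<in>supp x. x f * (\<Sum>h\<in>supp y. y h * bvec (park_split (shuffled \<gamma> f h) r) t))"
    (is "?lhs = _")
proof -
  let ?T = "\<lambda>pa pb. tens (oprod pq_prod gamma1 (fst pa) (fst pb)) (oprod pq_prod gamma2 (snd pa) (snd pb)) t :: 'k"
  have "?lhs = (\<Sum>pa\<in>supp (dplus pq_cop x). dplus pq_cop x pa * (if odeg length (fst pa) = n1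
      then (\<Sum>pb\<in>supp (dplus pq_cop y). dplus pq_cop y pb * (if odeg length (fst pb) = m1 then ?T pa pb else 0))
      else 0))"
    by (rule sum_sum_if_conj)
  also have "\<dots> = (\<Sum>pa\<in>supp (dplus pq_cop x). dplus pq_cop x pa * (if odeg length (fst pa) = n1
      then (\<Sum>h\<in>supp y. y h * ?T pa (park_split_opt h m1)) else 0))"
    by (simp only: sum_dplus_degree[OF y m1_le])
  also have "\<dots> = (\<Sum>f\<in>supp x. x f * (\<Sum>h\<in>supp y. y h * ?T (park_split_opt f n1) (park_split_opt h m1)))"
    by (rule sum_dplus_degree[OF x n1_le])
  also have "\<dots> = (\<Sum>f\<in>supp x. x f * (\<Sum>h\<in>supp y. y h * bvec (park_split (shuffled \<gamma> f h) r) t))"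
    using tens_oprod_park_split_opt[where 'k = 'k] hom_PF_parking[OF x] hom_PF_parking[OF y] r
    by (intro sum.cong refl arg_cong2[where f="(*)"]) auto
  finally show ?thesis .
qed

end

lemma pq_cop_pq_prod:
  fixes x y :: "nat list \<Rightarrow> 'k::field"
  assumes x: "x \<in> hom PF_basis length n" and y: "y \<in> hom PF_basis length m" and g: "\<gamma> \<in> Sh n m"
  shows "pq_cop (pq_prod \<gamma> x y) t
    = (\<Sum>r\<in>{1..<n+m}. \<Sum>f\<in>supp x. x f * (\<Sum>h\<in>supp y. y h * bvec (park_split (shuffled \<gamma> f h) r) t))"
proof -
  have fx: "finite (supp x)" "finite (supp y)" using x y by (simp_all add: hom_PF_iff)
  have lw: "length (shuffled \<gamma> f h) = n + m" for f h using Sh_length[OF g] by simp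
  have "pq_cop (pq_prod \<gamma> x y) t = (\<Sum>p\<in>supp x \<times> supp y. (x (fst p) * y (snd p)) *
      (\<Sum>r\<in>{1..<n+m}. bvec (park_split (shuffled \<gamma> (fst p) (snd p)) r) t))"
    unfolding pq_cop_alt[of "pq_prod \<gamma> x y"] using fx lw
    by (subst sum_supp_linear_combination[OF _ _ pq_prod_Times[OF fx]]) simp_all
  also have "\<dots> = (\<Sum>f\<in>supp x. \<Sum>h\<in>supp y. \<Sum>r\<in>{1..<n+m}. x f * (y h * bvec (park_split (shuffled \<gamma> f h) r) t))"
    by (simp only: sum.cartesian_product') (simp add: sum_distrib_left mult.assoc)
  also have "\<dots> = (\<Sum>r\<in>{1..<n+m}. \<Sum>f\<in>supp x. \<Sum>h\<in>supp y. x f * (y h * bvec (park_split (shuffled \<gamma> f h) r) t))"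
    by (rule trans[OF sum.cong[OF refl sum.swap] sum.swap])
  finally show ?thesis by (simp add: sum_distrib_left)
qed

lemma pq_compatibility:
  fixes x y :: "nat list \<Rightarrow> 'k::field"
  assumes x: "x \<in> hom PF_basis length n" and y: "y \<in> hom PF_basis length m" and g: "\<gamma> \<in> Sh n m"
  shows "pq_cop (pq_prod \<gamma> x y) =
       (\<lambda>t. \<Sum>r\<in>{1..n+m-1}.
          let n1 = sh_n1 \<gamma> n r; m1 = r - n1; g = sh_decomp \<gamma> n m r in
          \<Sum>(a1, a2)\<in>supp (dplus pq_cop x). \<Sum>(b1, b2)\<in>supp (dplus pq_cop y).
            if odeg length a1 = n1 \<and> odeg length b1 = m1
            then dplus pq_cop x (a1, a2) * dplus pq_cop y (b1, b2) *
                 tens (oprod pq_prod (fst g) a1 b1) (oprod pq_prod (snd g) a2 b2) t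
            else 0)"
    (is "_ = (\<lambda>t. \<Sum>r\<in>_. ?summand t r)")
proof (rule ext)
  fix t
  have "{1..n+m-1} = {1..<n+m}" by auto
  moreover have "(\<Sum>f\<in>supp x. x f * (\<Sum>h\<in>supp y. y h * bvec (park_split (shuffled \<gamma> f h) r) t))
      = ?summand t r" if r_range: "r \<in> {1..<n+m}" for r
  proof -
    interpret shuffle_cut \<gamma> n m r using g r_range by unfold_locales auto
    show ?thesis
      unfolding Let_def n1_def[symmetric] m1_def[symmetric] sh_decomp_eq fst_conv snd_conv
        case_prod_unfold prod.collapse
      using r_range compat_summand[OF x y, of t] by simp
  qed
  ultimately show "pq_cop (pq_prod \<gamma> x y) t = (\<Sum>r\<in>{1..n+m-1}. ?summand t r)"
    unfolding pq_cop_pq_prod[OF x y g] by (intro sum.cong) auto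
qed

theorem mainTheorem9:
  shows "shuffle_bialgebra PF_basis length
           (pq_prod :: nat list \<Rightarrow> (nat list \<Rightarrow> 'k::field) \<Rightarrow> _ \<Rightarrow> _) pq_cop"
  unfolding shuffle_bialgebra_def
  using pq_shuffle_algebra hom_PF_0 pq_cop_linear pq_cop_graded pq_cop_coassoc pq_compatibility
  by blast

end
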